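(* Let $m<N$ and let $A\in\mathbb{R}^{m\times N}$ have full row rank and rows $a_1,\dots,a_m$ of unit Euclidean norm. Let $X$ be an $\mathbb{R}^N$-valued random vector with $\mathbb{E}\|X\|^2<\infty$, let $W$ be an $\mathbb{R}^m$-valued random vector with $\mathbb{E}W=0$ and $\mathbb{E}\|W\|^2<\infty$, and let $Z$ be a random variable with values in $[m]=\{1,\dots,m\}$ with $\Pr\{Z=i\}=\lambda_i>0$ for all $i\in[m]$. Let $\{X_k\}_{k\ge1},\{W_k\}_{k\ge1},\{Z_k\}_{k\ge1}$ be IID copies of $X,W,Z$ respectively, with the three sequences jointly independent, and set $Y_k:=AX_k+W_k$, $\mathcal{Y}_k:=Y_k(Z_k)$ (the $Z_k$-th component of $Y_k$), and $Y:=AX+W$. Let $\{\eta_k\}_{k\ge0}$ be positive step sizes with $\sum_k\eta_k=\infty$ and $\sum_k\eta_k^2<\infty$. Fix $x_0\in\mathbb{R}^N$ and define $\alpha_0=0\in\mathbb{R}^m$ and $$\alpha_{k+1}=\alpha_k+\eta_k\big[\tilde Y_{k+1}-e_{Z_{k+1}}A(x_0+A'\alpha_k)\big],\quad k\ge0,$$ where $e_{j}$ denotes the $m\times m$ matrix with $1$ in its $(j,j)$ entry and zeros elsewhere, and $\tilde Y_{k+1}\in\mathbb{R}^m$ is the vector whose $Z_{k+1}$-th entry is $\mathcal{Y}_{k+1}$ and whose other entries are $0$. Then, almost surely, $$\alpha_k\to\alpha^*:=(AA')^{-1}(\mathbb{E}Y-Ax_0)\quad\text{as }k\to\infty.$$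
   Context: $A'$ denotes the transpose of $A$; $\|\cdot\|$ is the Euclidean norm. Equivalently, the iterates $x_k:=x_0+A'\alpha_k$ satisfy the stochastic Kaczmarz recursion $x_{k+1}=x_k+\eta_k[\mathcal{Y}_{k+1}-\langle a_{Z_{k+1}},x_k\rangle]a_{Z_{k+1}}$. *)

theory Defs
  imports "HOL-Probability.Probability"
begin

text \<open>Indices of the random variables X_k, W_k, Z_k (k >= 1) used to express
  the joint independence of the three IID sequences.\<close>
datatype kidx = IX nat | IW nat | IZ nat

definition kacz_events ::
  "'w measure \<Rightarrow> (nat \<Rightarrow> 'w \<Rightarrow> real^'n) \<Rightarrow> (nat \<Rightarrow> 'w \<Rightarrow> real^'m) \<Rightarrow> (nat \<Rightarrow> 'w \<Rightarrow> 'm)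
    \<Rightarrow> kidx \<Rightarrow> 'w set set" where
  "kacz_events M Xs Ws Zs i = (case i of
      IX k \<Rightarrow> {Xs k -` B \<inter> space M | B. B \<in> sets borel}
    | IW k \<Rightarrow> {Ws k -` B \<inter> space M | B. B \<in> sets borel}
    | IZ k \<Rightarrow> {Zs k -` B \<inter> space M | B. B \<in> sets (count_space UNIV)})"

definition unit_diag :: "'m \<Rightarrow> real^'m^'m" where
  "unit_diag j = (\<chi> i l. if i = j \<and> l = j then 1 else 0)"

end

theory Submission
  imports Defs "HOL-Probability.Probability"
begin

text \<open>
  Write err_k = \<alpha>_k - \<alpha>*. Because A A' \<alpha>* = E Y - A x0, a step changes only the selected
  coordinate i, by \<eta>_k times the centred observation minus (A A' err_k)_i. Averaging over the
  selection splits the step into the deterministic drift -\<eta>_k \<lambda>_i (A A' err_k)_i and a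
  martingale difference. The mean square error weighted by 1/\<lambda>_i grows at most by a factor
  1 + O(\<eta>_k^2) per step, so it stays bounded since \<Sum> \<eta>_k^2 < \<infinity>; hence the martingale
  differences have summable second moments, and Kolmogorov's maximal inequality makes their
  partial sums converge almost surely. Along such a path err_k satisfies a linear recursion with a
  convergent perturbation, and since A A' is positive definite and \<Sum> \<eta>_k = \<infinity>, a contraction
  argument in the same weighted norm gives err_k \<rightarrow> 0.
\<close>

section \<open>Square-integrable functions\<close>

lemma square_sum_le: "((a::real) + b)\<^sup>2 \<le> 2 * a\<^sup>2 + 2 * b\<^sup>2"
  using sum_squares_bound[of a b] by (simp add: power2_sum)

lemma abs_mult_le_sum_squares: "\<bar>(a::real) * b\<bar> \<le> a\<^sup>2 + b\<^sup>2"
proof -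
  have "2 * \<bar>a\<bar> * \<bar>b\<bar> \<le> a\<^sup>2 + b\<^sup>2" using sum_squares_bound[of "\<bar>a\<bar>" "\<bar>b\<bar>"] by simp
  moreover have "0 \<le> \<bar>a\<bar> * \<bar>b\<bar>" by simp
  ultimately show ?thesis unfolding abs_mult by linarith
qed

lemma (in finite_measure) integrable_if_norm_square_integrable:
  fixes g :: "'a \<Rightarrow> 'b::{banach, second_countable_topology}"
  assumes "g \<in> borel_measurable M" and "integrable M (\<lambda>x. (norm (g x))\<^sup>2)"
  shows "integrable M g"
  using square_integrable_imp_integrable[of "\<lambda>x. norm (g x)"] assms integrable_norm_iff by auto

context finite_measure
begin

definition square_integrable :: "('a \<Rightarrow> real) \<Rightarrow> bool" where
  "square_integrable f \<longleftrightarrow> f \<in> borel_measurable M \<and> integrable M (\<lambda>x. (f x)\<^sup>2)"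

lemma square_integrable_square: "square_integrable f \<Longrightarrow> integrable M (\<lambda>x. (f x)\<^sup>2)"
  by (simp add: square_integrable_def)

lemma square_integrable_integrable: "square_integrable f \<Longrightarrow> integrable M f"
  using square_integrable_imp_integrable square_integrable_def by blast

lemma integrable_mult_square_integrable:
  assumes "square_integrable f" "square_integrable g"
  shows "integrable M (\<lambda>x. f x * g x)"
proof (rule Bochner_Integration.integrable_bound[where f="\<lambda>x. (f x)\<^sup>2 + (g x)\<^sup>2"])
  show "integrable M (\<lambda>x. (f x)\<^sup>2 + (g x)\<^sup>2)" using assms by (auto simp: square_integrable_def)
  show "(\<lambda>x. f x * g x) \<in> borel_measurable M" using assms by (auto simp: square_integrable_def)
  show "AE x in M. norm (f x * g x) \<le> norm ((f x)\<^sup>2 + (g x)\<^sup>2)"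
    using abs_mult_le_sum_squares by auto
qed

lemma square_integrable_const: "square_integrable (\<lambda>x. c)"
  by (simp add: square_integrable_def)

lemma square_integrable_add:
  assumes "square_integrable f" "square_integrable g"
  shows "square_integrable (\<lambda>x. f x + g x)"
  unfolding square_integrable_def
proof
  show "(\<lambda>x. f x + g x) \<in> borel_measurable M" using assms by (auto simp: square_integrable_def)
  show "integrable M (\<lambda>x. (f x + g x)\<^sup>2)"
  proof (rule Bochner_Integration.integrable_bound[where f="\<lambda>x. 2 * (f x)\<^sup>2 + 2 * (g x)\<^sup>2"])
    show "integrable M (\<lambda>x. 2 * (f x)\<^sup>2 + 2 * (g x)\<^sup>2)"
      using assms by (auto simp: square_integrable_def)
    show "(\<lambda>x. (f x + g x)\<^sup>2) \<in> borel_measurable M" using assms by (auto simp: square_integrable_def)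
    show "AE x in M. norm ((f x + g x)\<^sup>2) \<le> norm (2 * (f x)\<^sup>2 + 2 * (g x)\<^sup>2)"
      using square_sum_le by auto
  qed
qed

lemma square_integrable_cmult: "square_integrable f \<Longrightarrow> square_integrable (\<lambda>x. c * f x)"
  by (auto simp: square_integrable_def power_mult_distrib)

lemma square_integrable_diff:
  assumes "square_integrable f" "square_integrable g"
  shows "square_integrable (\<lambda>x. f x - g x)"
  using square_integrable_add[OF assms(1) square_integrable_cmult[OF assms(2), of "-1"]] by simp

lemma square_integrable_sum:
  "(\<And>i. i \<in> I \<Longrightarrow> square_integrable (f i)) \<Longrightarrow> square_integrable (\<lambda>x. \<Sum>i\<in>I. f i x)"
proof (induction I rule: infinite_finite_induct)
  case (insert i I) then show ?case by (simp add: square_integrable_add)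
qed (auto simp: square_integrable_const)

lemma square_integrable_bounded_mult:
  assumes f: "square_integrable f" and g: "g \<in> borel_measurable M" and bound: "\<And>x. \<bar>g x\<bar> \<le> 1"
  shows "square_integrable (\<lambda>x. g x * f x)"
  unfolding square_integrable_def
proof
  show "(\<lambda>x. g x * f x) \<in> borel_measurable M" using f g by (auto simp: square_integrable_def)
  show "integrable M (\<lambda>x. (g x * f x)\<^sup>2)"
  proof (rule Bochner_Integration.integrable_bound[where f="\<lambda>x. (f x)\<^sup>2"])
    show "integrable M (\<lambda>x. (f x)\<^sup>2)" using f by (simp add: square_integrable_def)
    show "(\<lambda>x. (g x * f x)\<^sup>2) \<in> borel_measurable M" using f g by (auto simp: square_integrable_def)
    have "(g x)\<^sup>2 * (f x)\<^sup>2 \<le> (f x)\<^sup>2" for x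
      using bound[of x] by (intro mult_left_le_one_le) (auto simp: abs_square_le_1)
    then show "AE x in M. norm ((g x * f x)\<^sup>2) \<le> norm ((f x)\<^sup>2)"
      by (simp add: power_mult_distrib)
  qed
qed

lemma square_integrable_bounded_linear:
  fixes T :: "'b::{real_normed_vector, second_countable_topology} \<Rightarrow> real"
  assumes T: "bounded_linear T" and g: "g \<in> borel_measurable M"
    and g_sq: "integrable M (\<lambda>x. (norm (g x))\<^sup>2)"
  shows "square_integrable (\<lambda>x. T (g x))"
  unfolding square_integrable_def
proof
  have Tg: "(\<lambda>x. T (g x)) \<in> borel_measurable M"
    using borel_measurable_continuous_on[OF linear_continuous_on[OF T] g] .
  then show "(\<lambda>x. T (g x)) \<in> borel_measurable M" .
  obtain K where K: "\<And>v. norm (T v) \<le> norm v * K"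
    using bounded_linear.pos_bounded[OF T] by blast
  show "integrable M (\<lambda>x. (T (g x))\<^sup>2)"
  proof (rule Bochner_Integration.integrable_bound[where f="\<lambda>x. K\<^sup>2 * (norm (g x))\<^sup>2"])
    show "integrable M (\<lambda>x. K\<^sup>2 * (norm (g x))\<^sup>2)" using g_sq by simp
    show "(\<lambda>x. (T (g x))\<^sup>2) \<in> borel_measurable M" using Tg by simp
    have "\<bar>T (g x)\<bar>\<^sup>2 \<le> (norm (g x) * K)\<^sup>2" for x
      using K[of "g x"] by (intro power_mono) auto
    then show "AE x in M. norm ((T (g x))\<^sup>2) \<le> norm (K\<^sup>2 * (norm (g x))\<^sup>2)"
      by (simp add: power_mult_distrib mult.commute)
  qed
qed

end

section \<open>Kolmogorov's inequality for orthogonal increments\<close>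

lemma convergent_if_small_tail_sums:
  fixes a :: "nat \<Rightarrow> real"
  assumes small: "\<forall>p::nat. \<exists>k. \<forall>n\<ge>k. \<bar>\<Sum>j\<in>{k..<n}. a j\<bar> < 1 / Suc p"
  shows "convergent (\<lambda>n. \<Sum>j<n. a j)"
proof -
  have split: "(\<Sum>j<n. a j) = (\<Sum>j<k. a j) + (\<Sum>j\<in>{k..<n}. a j)" if "k \<le> n" for k n
    using that by (metis atLeast0LessThan sum.atLeastLessThan_concat zero_le)
  have "Cauchy (\<lambda>n. \<Sum>j<n. a j)"
  proof (rule metric_CauchyI)
    fix e :: real assume "0 < e"
    then obtain p :: nat where p: "1 / Suc p < e / 2"
      by (metis half_gt_zero_iff inverse_eq_divide nat_approx_posE of_nat_Suc)
    obtain k where k: "\<forall>n\<ge>k. \<bar>\<Sum>j\<in>{k..<n}. a j\<bar> < 1 / Suc p" using small by blast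
    have "dist (\<Sum>j<m. a j) (\<Sum>j<n. a j) < e" if "k \<le> m" "k \<le> n" for m n
      using k[rule_format, OF that(1)] k[rule_format, OF that(2)] p
      unfolding split[OF that(1)] split[OF that(2)] dist_real_def by linarith
    then show "\<exists>M. \<forall>m\<ge>M. \<forall>n\<ge>M. dist (\<Sum>j<m. a j) (\<Sum>j<n. a j) < e" by blast
  qed
  then show ?thesis by (simp add: Cauchy_convergent_iff)
qed

text \<open>Square-integrable martingale differences; the martingale property is only used through
  orthogonality to square-integrable functions of the past.\<close>

locale orthogonal_increments = prob_space +
  fixes F :: "nat \<Rightarrow> 'a measure" and d :: "nat \<Rightarrow> 'a \<Rightarrow> real"
  assumes subalgebra_filtration: "\<And>n. subalgebra M (F n)"
    and filtration_mono: "\<And>n. sets (F n) \<subseteq> sets (F (Suc n))"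
    and increment_measurable: "\<And>n. d n \<in> borel_measurable (F (Suc n))"
    and increment_square_integrable: "\<And>n. square_integrable (d n)"
    and increment_orthogonal:
      "\<And>n g. g \<in> borel_measurable (F n) \<Longrightarrow> square_integrable g \<Longrightarrow> (\<integral>x. g x * d n x \<partial>M) = 0"
begin

lemma space_filtration [simp]: "space (F n) = space M"
  using subalgebra_filtration by (simp add: subalgebra_def)

lemma sets_filtration: "A \<in> sets (F n) \<Longrightarrow> A \<in> sets M"
  using subalgebra_filtration by (auto simp: subalgebra_def)

lemma measurable_filtration: "f \<in> borel_measurable (F n) \<Longrightarrow> f \<in> borel_measurable M"
  using measurable_from_subalg[OF subalgebra_filtration] .

lemma measurable_filtration_mono:
  assumes "f \<in> borel_measurable (F m)" "m \<le> n"
  shows "f \<in> borel_measurable (F n)"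
proof (rule measurable_from_subalg[OF _ assms(1)])
  show "subalgebra (F n) (F m)"
    using lift_Suc_mono_le[of "\<lambda>n. sets (F n)", OF filtration_mono assms(2)]
    by (simp add: subalgebra_def)
qed

lemma increment_orthogonal_later:
  "g \<in> borel_measurable (F n) \<Longrightarrow> square_integrable g \<Longrightarrow> n \<le> j \<Longrightarrow> (\<integral>x. g x * d j x \<partial>M) = 0"
  using increment_orthogonal measurable_filtration_mono by blast

definition increment_sum :: "nat \<Rightarrow> nat \<Rightarrow> 'a \<Rightarrow> real" where
  "increment_sum k n x = (\<Sum>j\<in>{k..<n}. d j x)"

lemma increment_sum_measurable: "increment_sum k n \<in> borel_measurable (F n)"
proof -
  have "d j \<in> borel_measurable (F n)" if "j \<in> {k..<n}" for j
    using that increment_measurable measurable_filtration_mono by (metis atLeastLessThan_iff Suc_leI)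
  then show ?thesis unfolding increment_sum_def[abs_def] by (rule borel_measurable_sum)
qed

lemma increment_sum_square_integrable: "square_integrable (increment_sum k n)"
  unfolding increment_sum_def[abs_def]
  by (rule square_integrable_sum) (rule increment_square_integrable)

lemma increment_sum_split:
  "k \<le> n \<Longrightarrow> n \<le> N \<Longrightarrow> increment_sum k N x = increment_sum k n x + increment_sum n N x"
  unfolding increment_sum_def by (metis sum.atLeastLessThan_concat)

lemma integral_increment_sum_square:
  "(\<integral>x. (increment_sum k N x)\<^sup>2 \<partial>M) = (\<Sum>j\<in>{k..<N}. \<integral>x. (d j x)\<^sup>2 \<partial>M)"
proof (induction N)
  case 0 then show ?case by (simp add: increment_sum_def)
next
  case (Suc N)
  show ?case
  proof (cases "k \<le> N")
    case True
    let ?S = "increment_sum k N"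
    have "(\<lambda>x. (increment_sum k (Suc N) x)\<^sup>2) = (\<lambda>x. (?S x)\<^sup>2 + 2 * (?S x * d N x) + (d N x)\<^sup>2)"
      using True by (simp add: increment_sum_def power2_sum fun_eq_iff algebra_simps)
    moreover have "(\<integral>x. ?S x * d N x \<partial>M) = 0"
      by (rule increment_orthogonal[OF increment_sum_measurable increment_sum_square_integrable])
    ultimately show ?thesis
      using Suc True increment_sum_square_integrable increment_square_integrable
      by (simp add: square_integrable_square integrable_mult_square_integrable)
  next
    case False
    then show ?thesis by (simp add: increment_sum_def)
  qed
qed

lemma integral_increment_sum_square_indicator_mono:
  assumes kn: "k \<le> n" and nN: "n \<le> N" and A: "A \<in> sets (F n)"
  shows "(\<integral>x. (increment_sum k n x)\<^sup>2 * indicator A x \<partial>M)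
    \<le> (\<integral>x. (increment_sum k N x)\<^sup>2 * indicator A x \<partial>M)"
proof -
  let ?S = "increment_sum k n" and ?R = "increment_sum n N"
  define g where "g x = indicator A x * ?S x" for x
  have AM: "A \<in> sets M" using sets_filtration[OF A] .
  have g_meas: "g \<in> borel_measurable (F n)"
    unfolding g_def using increment_sum_measurable A by measurable
  have g_sq: "square_integrable g"
    unfolding g_def using AM
    by (intro square_integrable_bounded_mult increment_sum_square_integrable) (auto simp: indicator_def)
  have orth: "(\<integral>x. g x * ?R x \<partial>M) = 0"
  proof -
    have "(\<integral>x. g x * ?R x \<partial>M) = (\<Sum>j\<in>{n..<N}. \<integral>x. g x * d j x \<partial>M)"
      unfolding increment_sum_def sum_distrib_left
      by (rule Bochner_Integration.integral_sum)
         (use g_sq increment_square_integrable integrable_mult_square_integrable in blast)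
    also have "\<dots> = 0" using increment_orthogonal_later[OF g_meas g_sq] by simp
    finally show ?thesis .
  qed
  have eq: "(\<lambda>x. (increment_sum k N x)\<^sup>2 * indicator A x) =
      (\<lambda>x. (?S x)\<^sup>2 * indicator A x + 2 * (g x * ?R x) + (?R x)\<^sup>2 * indicator A x)"
    using increment_sum_split[OF kn nN] by (auto simp: g_def indicator_def power2_sum fun_eq_iff)
  have "integrable M (\<lambda>x. (f x)\<^sup>2 * indicator A x)" if "square_integrable f" for f
    using integrable_real_mult_indicator[OF AM square_integrable_square[OF that]] .
  moreover have "integrable M (\<lambda>x. g x * ?R x)"
    using g_sq increment_sum_square_integrable by (rule integrable_mult_square_integrable)
  ultimately have "(\<integral>x. (increment_sum k N x)\<^sup>2 * indicator A x \<partial>M) =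
      (\<integral>x. (?S x)\<^sup>2 * indicator A x \<partial>M) + 2 * (\<integral>x. g x * ?R x \<partial>M)
      + (\<integral>x. (?R x)\<^sup>2 * indicator A x \<partial>M)"
    unfolding eq using increment_sum_square_integrable by simp
  moreover have "0 \<le> (\<integral>x. (?R x)\<^sup>2 * indicator A x \<partial>M)"
    by (rule integral_nonneg_AE) (auto simp: indicator_def)
  ultimately show ?thesis using orth by simp
qed

definition first_exceedance :: "real \<Rightarrow> nat \<Rightarrow> nat \<Rightarrow> 'a set" where
  "first_exceedance \<epsilon> k n =
    {x \<in> space M. (\<forall>l\<in>{k..<n}. \<bar>increment_sum k l x\<bar> < \<epsilon>) \<and> \<epsilon> \<le> \<bar>increment_sum k n x\<bar>}"

lemma first_exceedance_sets: "first_exceedance \<epsilon> k n \<in> sets (F n)"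
proof -
  have meas: "increment_sum k l \<in> borel_measurable (F n)" if "l \<le> n" for l
    using measurable_filtration_mono[OF increment_sum_measurable that] .
  have "Measurable.pred (F n) (\<lambda>x. \<bar>increment_sum k l x\<bar> < \<epsilon>)" if "l \<le> n" for l
    using borel_measurable_less[OF borel_measurable_abs[OF meas[OF that]] borel_measurable_const]
    by (simp add: Measurable.pred_def)
  moreover have "Measurable.pred (F n) (\<lambda>x. \<epsilon> \<le> \<bar>increment_sum k n x\<bar>)"
    using borel_measurable_le[OF borel_measurable_const borel_measurable_abs[OF meas[of n]]]
    by (simp add: Measurable.pred_def)
  ultimately have "Measurable.pred (F n)
      (\<lambda>x. (\<forall>l\<in>{k..<n}. \<bar>increment_sum k l x\<bar> < \<epsilon>) \<and> \<epsilon> \<le> \<bar>increment_sum k n x\<bar>)"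
    by (intro pred_intros_logic pred_intros_finite) auto
  then show ?thesis by (simp add: first_exceedance_def Measurable.pred_def)
qed

lemma disjoint_first_exceedance:
  assumes "0 < \<epsilon>" shows "disjoint_family (first_exceedance \<epsilon> k)"
proof -
  have disj: "first_exceedance \<epsilon> k n \<inter> first_exceedance \<epsilon> k m = {}" if "n < m" for n m
  proof (cases "k \<le> n")
    case True
    have "x \<notin> first_exceedance \<epsilon> k n" if "x \<in> first_exceedance \<epsilon> k m" for x
    proof -
      have "\<bar>increment_sum k n x\<bar> < \<epsilon>"
        using that True \<open>n < m\<close> by (simp add: first_exceedance_def)
      then show ?thesis by (simp add: first_exceedance_def)
    qed
    then show ?thesis by blast
  next
    case False
    then have "increment_sum k n x = 0" for x by (simp add: increment_sum_def)
    with assms show ?thesis by (simp add: first_exceedance_def)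
  qed
  show ?thesis unfolding disjoint_family_on_def
  proof (intro ballI impI)
    fix n m :: nat assume "n \<noteq> m"
    then consider "n < m" | "m < n" by linarith
    then show "first_exceedance \<epsilon> k n \<inter> first_exceedance \<epsilon> k m = {}"
      by cases (use disj in \<open>auto simp: Int_commute\<close>)
  qed
qed

lemma Union_first_exceedance:
  "{x \<in> space M. \<exists>n\<in>{k..N}. \<epsilon> \<le> \<bar>increment_sum k n x\<bar>} = (\<Union>n\<in>{k..N}. first_exceedance \<epsilon> k n)"
    (is "?L = ?R")
proof
  show "?L \<subseteq> ?R"
  proof
    fix x assume x: "x \<in> ?L"
    then obtain n where n: "n \<in> {k..N}" "\<epsilon> \<le> \<bar>increment_sum k n x\<bar>"
      and first: "\<forall>l<n. \<not> (l \<in> {k..N} \<and> \<epsilon> \<le> \<bar>increment_sum k l x\<bar>)"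
      using exists_least_iff[of "\<lambda>n. n \<in> {k..N} \<and> \<epsilon> \<le> \<bar>increment_sum k n x\<bar>"] by auto
    have "x \<in> first_exceedance \<epsilon> k n"
      using x n first unfolding first_exceedance_def by (auto simp: not_le)
    then show "x \<in> ?R" using n(1) by blast
  qed
  show "?R \<subseteq> ?L" by (auto simp: first_exceedance_def)
qed

lemma measure_first_exceedance_le:
  assumes "k \<le> n" "n \<le> N" and "0 < \<epsilon>"
  shows "\<epsilon>\<^sup>2 * measure M (first_exceedance \<epsilon> k n)
    \<le> (\<integral>x. (increment_sum k N x)\<^sup>2 * indicator (first_exceedance \<epsilon> k n) x \<partial>M)"
proof -
  let ?A = "first_exceedance \<epsilon> k n"
  have AM: "?A \<in> sets M" using sets_filtration[OF first_exceedance_sets] .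
  have "\<epsilon>\<^sup>2 * measure M ?A = (\<integral>x. \<epsilon>\<^sup>2 * indicator ?A x \<partial>M)"
    using AM by simp
  also have "\<dots> \<le> (\<integral>x. (increment_sum k n x)\<^sup>2 * indicator ?A x \<partial>M)"
  proof (rule integral_mono)
    show "integrable M (\<lambda>x. \<epsilon>\<^sup>2 * indicator ?A x)"
      using integrable_real_mult_indicator[OF AM, of "\<lambda>x. \<epsilon>\<^sup>2"] by simp
    show "integrable M (\<lambda>x. (increment_sum k n x)\<^sup>2 * indicator ?A x)"
      using integrable_real_mult_indicator[OF AM square_integrable_square]
        increment_sum_square_integrable by blast
    have "\<epsilon>\<^sup>2 \<le> (increment_sum k n x)\<^sup>2" if "x \<in> ?A" for x
      using that \<open>0 < \<epsilon>\<close> by (auto simp: first_exceedance_def abs_le_square_iff[symmetric])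
    then show "\<epsilon>\<^sup>2 * indicator ?A x \<le> (increment_sum k n x)\<^sup>2 * indicator ?A x" for x
      by (auto simp: indicator_def)
  qed
  also have "\<dots> \<le> (\<integral>x. (increment_sum k N x)\<^sup>2 * indicator ?A x \<partial>M)"
    using integral_increment_sum_square_indicator_mono[OF assms(1,2) first_exceedance_sets] .
  finally show ?thesis .
qed

theorem kolmogorov_maximal_inequality:
  assumes "k \<le> N" and "0 < \<epsilon>"
  shows "\<epsilon>\<^sup>2 * measure M {x \<in> space M. \<exists>n\<in>{k..N}. \<epsilon> \<le> \<bar>increment_sum k n x\<bar>}
    \<le> (\<Sum>j\<in>{k..<N}. \<integral>x. (d j x)\<^sup>2 \<partial>M)"
proof -
  let ?A = "first_exceedance \<epsilon> k" and ?S = "increment_sum k N"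
  have AM: "?A n \<in> sets M" for n using sets_filtration[OF first_exceedance_sets] .
  have int_S: "integrable M (\<lambda>x. (?S x)\<^sup>2 * indicator B x)" if "B \<in> sets M" for B
    using integrable_real_mult_indicator[OF that square_integrable_square] increment_sum_square_integrable
    by blast
  have "\<epsilon>\<^sup>2 * measure M {x \<in> space M. \<exists>n\<in>{k..N}. \<epsilon> \<le> \<bar>increment_sum k n x\<bar>}
      = (\<Sum>n\<in>{k..N}. \<epsilon>\<^sup>2 * measure M (?A n))"
    unfolding Union_first_exceedance sum_distrib_left[symmetric]
    by (subst measure_finite_Union)
       (use AM disjoint_first_exceedance[OF \<open>0 < \<epsilon>\<close>] in \<open>auto simp: disjoint_family_on_def\<close>)
  also have "\<dots> \<le> (\<Sum>n\<in>{k..N}. \<integral>x. (?S x)\<^sup>2 * indicator (?A n) x \<partial>M)"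
    using measure_first_exceedance_le \<open>0 < \<epsilon>\<close> by (intro sum_mono) auto
  also have "\<dots> = (\<integral>x. (?S x)\<^sup>2 * indicator (\<Union>n\<in>{k..N}. ?A n) x \<partial>M)"
    using disjoint_first_exceedance[OF \<open>0 < \<epsilon>\<close>]
    by (subst Bochner_Integration.integral_sum[symmetric, OF int_S[OF AM]])
       (simp add: sum_distrib_left[symmetric] indicator_UN_disjoint disjoint_family_on_def)
  also have "\<dots> \<le> (\<integral>x. (?S x)\<^sup>2 \<partial>M)"
  proof (rule integral_mono)
    show "integrable M (\<lambda>x. (?S x)\<^sup>2 * indicator (\<Union>n\<in>{k..N}. ?A n) x)"
      using AM by (intro int_S) auto
    show "integrable M (\<lambda>x. (?S x)\<^sup>2)"
      using increment_sum_square_integrable square_integrable_square by blast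
  qed (auto simp: indicator_def)
  also have "\<dots> = (\<Sum>j\<in>{k..<N}. \<integral>x. (d j x)\<^sup>2 \<partial>M)"
    by (rule integral_increment_sum_square)
  finally show ?thesis .
qed

lemma measure_increment_sum_exceeds_le:
  assumes summable: "summable (\<lambda>j. \<integral>x. (d j x)\<^sup>2 \<partial>M)" and "0 < c"
  shows "measure M {x \<in> space M. \<exists>n\<ge>k. c \<le> \<bar>increment_sum k n x\<bar>}
    \<le> ((\<Sum>j. \<integral>x. (d j x)\<^sup>2 \<partial>M) - (\<Sum>j<k. \<integral>x. (d j x)\<^sup>2 \<partial>M)) / c\<^sup>2"
proof -
  let ?f = "\<lambda>j. \<integral>x. (d j x)\<^sup>2 \<partial>M"
  let ?B = "\<lambda>N. {x \<in> space M. \<exists>n\<in>{k..N}. c \<le> \<bar>increment_sum k n x\<bar>}"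
  have B_sets: "?B N \<in> sets M" for N
    using sets_filtration[OF first_exceedance_sets] by (auto simp: Union_first_exceedance)
  have B_le: "measure M (?B N) \<le> ((\<Sum>j. ?f j) - (\<Sum>j<k. ?f j)) / c\<^sup>2" for N
  proof (cases "k \<le> N")
    case True
    have "(\<Sum>j\<in>{k..<N}. ?f j) = (\<Sum>j<N. ?f j) - (\<Sum>j<k. ?f j)"
      using sum_diff_nat_ivl[of 0 k N ?f] True by (simp add: atLeast0LessThan)
    also have "\<dots> \<le> (\<Sum>j. ?f j) - (\<Sum>j<k. ?f j)"
      using sum_le_suminf[OF summable, of "{..<N}"] by simp
    finally show ?thesis
      using kolmogorov_maximal_inequality[OF True \<open>0 < c\<close>] \<open>0 < c\<close>
      by (simp add: field_simps)
  next
    case False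
    then have empty: "?B N = {}" by auto
    have "(\<Sum>j<k. ?f j) \<le> (\<Sum>j. ?f j)"
      by (rule sum_le_suminf[OF summable]) simp_all
    then show ?thesis unfolding empty by simp
  qed
  have "{x \<in> space M. \<exists>n\<ge>k. c \<le> \<bar>increment_sum k n x\<bar>} = (\<Union>N. ?B N)"
  proof
    show "{x \<in> space M. \<exists>n\<ge>k. c \<le> \<bar>increment_sum k n x\<bar>} \<subseteq> (\<Union>N. ?B N)"
    proof
      fix x assume "x \<in> {x \<in> space M. \<exists>n\<ge>k. c \<le> \<bar>increment_sum k n x\<bar>}"
      then obtain n where "x \<in> space M" "k \<le> n" "c \<le> \<bar>increment_sum k n x\<bar>" by blast
      then show "x \<in> (\<Union>N. ?B N)" by (intro UN_I[of n]) auto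
    qed
  qed auto
  moreover have "(\<lambda>N. measure M (?B N)) \<longlonglongrightarrow> measure M (\<Union>N. ?B N)"
    by (rule finite_Lim_measure_incseq) (use B_sets in \<open>auto simp: incseq_def\<close>)
  then have "measure M (\<Union>N. ?B N) \<le> ((\<Sum>j. ?f j) - (\<Sum>j<k. ?f j)) / c\<^sup>2"
    by (rule LIMSEQ_le_const2) (use B_le in blast)
  ultimately show ?thesis by simp
qed

lemma AE_eventually_small_increment_sums:
  assumes summable: "summable (\<lambda>j. \<integral>x. (d j x)\<^sup>2 \<partial>M)" and "0 < c"
  shows "AE x in M. \<exists>k. \<forall>n\<ge>k. \<bar>increment_sum k n x\<bar> < c"
proof -
  let ?f = "\<lambda>j. \<integral>x. (d j x)\<^sup>2 \<partial>M"
  let ?Bad = "\<lambda>k. {x \<in> space M. \<exists>n\<ge>k. c \<le> \<bar>increment_sum k n x\<bar>}"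
  have Bad_sets: "?Bad k \<in> sets M" for k
  proof -
    have [measurable]: "increment_sum k n \<in> borel_measurable M" for n
      using measurable_filtration[OF increment_sum_measurable] .
    show ?thesis by measurable
  qed
  have "(\<lambda>k. (\<Sum>j. ?f j) - (\<Sum>j<k. ?f j)) \<longlonglongrightarrow> 0"
    using tendsto_diff[OF tendsto_const summable_LIMSEQ[OF summable], of "\<Sum>j. ?f j"] by simp
  then have tail: "(\<lambda>k. ((\<Sum>j. ?f j) - (\<Sum>j<k. ?f j)) / c\<^sup>2) \<longlonglongrightarrow> 0"
    by (rule tendsto_divide_zero)
  have Inter_sets: "(\<Inter>k. ?Bad k) \<in> sets M"
    using Bad_sets by (intro sets.countable_INT) blast+
  have bound: "measure M (\<Inter>k. ?Bad k) \<le> ((\<Sum>j. ?f j) - (\<Sum>j<k. ?f j)) / c\<^sup>2" for k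
  proof -
    have "measure M (\<Inter>k. ?Bad k) \<le> measure M (?Bad k)"
      by (rule finite_measure_mono[OF _ Bad_sets]) blast
    then show ?thesis using measure_increment_sum_exceeds_le[OF summable \<open>0 < c\<close>, of k] by linarith
  qed
  have "measure M (\<Inter>k. ?Bad k) \<le> 0"
    by (rule LIMSEQ_le_const[OF tail]) (use bound in blast)
  then have "emeasure M (\<Inter>k. ?Bad k) = 0"
    using measure_nonneg[of M "\<Inter>k. ?Bad k"] by (simp add: emeasure_eq_measure)
  then have "(\<Inter>k. ?Bad k) \<in> null_sets M"
    using Inter_sets by (rule null_setsI)
  moreover have "{x \<in> space M. \<not> (\<exists>k. \<forall>n\<ge>k. \<bar>increment_sum k n x\<bar> < c)} \<subseteq> (\<Inter>k. ?Bad k)"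
    unfolding subset_iff by (simp add: not_less)
  ultimately show ?thesis by (rule AE_I')
qed

theorem AE_convergent_increment_sums:
  assumes "summable (\<lambda>j. \<integral>x. (d j x)\<^sup>2 \<partial>M)"
  shows "AE x in M. convergent (\<lambda>n. \<Sum>j<n. d j x)"
proof -
  have "AE x in M. \<forall>p::nat. \<exists>k. \<forall>n\<ge>k. \<bar>\<Sum>j\<in>{k..<n}. d j x\<bar> < 1 / Suc p"
    unfolding AE_all_countable increment_sum_def[symmetric]
    using AE_eventually_small_increment_sums[OF assms] by simp
  then show ?thesis
    by (rule eventually_mono) (rule convergent_if_small_tail_sums)
qed
end

section \<open>Deterministic recursions\<close>

lemma divergent_descent_reaches_level:
  fixes a \<eta> :: "nat \<Rightarrow> real"
  assumes nonneg: "\<And>k. 0 \<le> a k" and eta_pos: "\<And>k. 0 < \<eta> k" and div: "\<not> summable \<eta>"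
    and "0 < \<delta>"
    and descent: "\<And>k. K \<le> k \<Longrightarrow> \<epsilon> \<le> a k \<Longrightarrow> a (Suc k) \<le> a k - \<delta> * \<eta> k"
  shows "\<exists>k\<ge>K. a k \<le> \<epsilon>"
proof (rule ccontr)
  assume "\<not> (\<exists>k\<ge>K. a k \<le> \<epsilon>)"
  then have above: "\<epsilon> \<le> a k" if "K \<le> k" for k
    using that by force
  have decay: "a (K + n) \<le> a K - \<delta> * (\<Sum>j<n. \<eta> (K + j))" for n
  proof (induction n)
    case (Suc n)
    have "a (K + Suc n) \<le> a (K + n) - \<delta> * \<eta> (K + n)"
      using descent[of "K + n"] above[of "K + n"] by simp
    with Suc show ?case by (simp add: algebra_simps)
  qed simp
  have "\<not> summable (\<lambda>j. \<eta> (j + K))"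
    using div summable_iff_shift[of \<eta> K] by simp
  then have "\<not> (\<forall>n. (\<Sum>j<n. \<eta> (K + j)) \<le> a K / \<delta>)"
    using summableI_nonneg_bounded[of "\<lambda>j. \<eta> (j + K)" "a K / \<delta>"] eta_pos
    by (auto simp: less_imp_le add.commute)
  then obtain n where "a K / \<delta> < (\<Sum>j<n. \<eta> (K + j))" by (auto simp: not_le)
  then have "a K < \<delta> * (\<Sum>j<n. \<eta> (K + j))"
    using \<open>0 < \<delta>\<close> by (simp add: pos_divide_less_eq mult.commute)
  then have "a (K + n) < 0" using decay[of n] by linarith
  with nonneg[of "K + n"] show False by simp
qed

lemma perturbed_contraction_eventually_le:
  fixes a b \<eta> :: "nat \<Rightarrow> real"
  assumes nonneg: "\<And>k. 0 \<le> a k" and "0 < c"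
    and eta_pos: "\<And>k. 0 < \<eta> k" and eta_lim: "\<eta> \<longlonglongrightarrow> 0" and div: "\<not> summable \<eta>"
    and recursion: "eventually (\<lambda>k. a (Suc k) \<le> (1 - c * \<eta> k) * a k + \<eta> k * b k) sequentially"
    and b_lim: "b \<longlonglongrightarrow> 0" and "0 < \<epsilon>"
  shows "eventually (\<lambda>k. a k \<le> \<epsilon>) sequentially"
proof -
  have "eventually (\<lambda>k. b k < c * \<epsilon> / 2) sequentially"
    by (rule order_tendstoD(2)[OF b_lim]) (use \<open>0 < c\<close> \<open>0 < \<epsilon>\<close> in simp)
  moreover have "eventually (\<lambda>k. c * \<eta> k < 1) sequentially"
    using order_tendstoD(2)[OF tendsto_mult[OF tendsto_const eta_lim, of c], of 1] by simp
  ultimately have "eventually (\<lambda>k.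
      a (Suc k) \<le> (1 - c * \<eta> k) * a k + \<eta> k * b k \<and> b k < c * \<epsilon> / 2 \<and> c * \<eta> k < 1) sequentially"
    using recursion by (simp add: eventually_conj_iff)
  then obtain K where K: "\<And>k. K \<le> k \<Longrightarrow>
      a (Suc k) \<le> (1 - c * \<eta> k) * a k + \<eta> k * b k \<and> b k < c * \<epsilon> / 2 \<and> c * \<eta> k < 1"
    by (auto simp: eventually_sequentially)
  have one_step: "a (Suc k) \<le> (1 - c * \<eta> k) * a k + \<eta> k * (c * \<epsilon> / 2)" if "K \<le> k" for k
    using K[OF that] eta_pos[of k] mult_strict_left_mono[of "b k" "c * \<epsilon> / 2" "\<eta> k"] by linarith
  have "\<exists>k\<ge>K. a k \<le> \<epsilon>"
  proof (rule divergent_descent_reaches_level[OF nonneg eta_pos div])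
    show "0 < c * \<epsilon> / 2" using \<open>0 < c\<close> \<open>0 < \<epsilon>\<close> by simp
    show "a (Suc k) \<le> a k - c * \<epsilon> / 2 * \<eta> k" if "K \<le> k" "\<epsilon> \<le> a k" for k
    proof -
      have "c * \<eta> k * \<epsilon> \<le> c * \<eta> k * a k"
        using that(2) \<open>0 < c\<close> eta_pos[of k] by simp
      then show ?thesis using one_step[OF that(1)] by (simp add: algebra_simps)
    qed
  qed
  then obtain k0 where k0: "K \<le> k0" "a k0 \<le> \<epsilon>" by blast
  have "a k \<le> \<epsilon>" if "k0 \<le> k" for k
    using that
  proof (induction k rule: dec_induct)
    case (step k)
    have "(1 - c * \<eta> k) * a k \<le> (1 - c * \<eta> k) * \<epsilon>"
      using step.IH K[of k] step.hyps k0(1) by (intro mult_left_mono) auto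
    moreover have "0 \<le> c * \<eta> k * \<epsilon>"
      using \<open>0 < c\<close> eta_pos[of k] \<open>0 < \<epsilon>\<close> by simp
    ultimately show ?case
      using one_step[of k] step.hyps k0(1) by (simp add: algebra_simps)
  qed (use k0 in simp)
  then show ?thesis by (auto simp: eventually_sequentially)
qed

lemma perturbed_contraction_tendsto_zero:
  fixes a b \<eta> :: "nat \<Rightarrow> real"
  assumes nonneg: "\<And>k. 0 \<le> a k" and "0 < c"
    and eta_pos: "\<And>k. 0 < \<eta> k" and eta_lim: "\<eta> \<longlonglongrightarrow> 0" and div: "\<not> summable \<eta>"
    and recursion: "eventually (\<lambda>k. a (Suc k) \<le> (1 - c * \<eta> k) * a k + \<eta> k * b k) sequentially"
    and b_lim: "b \<longlonglongrightarrow> 0"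
  shows "a \<longlonglongrightarrow> 0"
proof (rule order_tendstoI)
  show "eventually (\<lambda>k. y < a k) sequentially" if "y < 0" for y
    using that nonneg by (intro always_eventually) (auto intro: less_le_trans)
  show "eventually (\<lambda>k. a k < y) sequentially" if "0 < y" for y
    using perturbed_contraction_eventually_le[OF assms, of "y / 2"] that
    by (auto elim: eventually_mono)
qed

definition weighted_norm :: "('m \<Rightarrow> real) \<Rightarrow> real^'m \<Rightarrow> real" where
  "weighted_norm w v = norm (\<chi> i. v $ i / sqrt (w i))"

lemma norm_square_vec: "(norm (v::real^'m))\<^sup>2 = (\<Sum>i\<in>UNIV. (v $ i)\<^sup>2)"
  unfolding power2_norm_eq_inner inner_vec_def by (simp add: power2_eq_square)

lemma weighted_norm_nonneg: "0 \<le> weighted_norm w v"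
  by (simp add: weighted_norm_def)

lemma weighted_norm_square:
  "(\<And>i. 0 \<le> w i) \<Longrightarrow> (weighted_norm w v)\<^sup>2 = (\<Sum>i\<in>UNIV. (v $ i)\<^sup>2 / w i)"
  unfolding weighted_norm_def norm_square_vec by (simp add: power_divide)

lemma weighted_norm_triangle: "weighted_norm w (u + v) \<le> weighted_norm w u + weighted_norm w v"
proof -
  have "(\<chi> i. (u + v) $ i / sqrt (w i)) = (\<chi> i. u $ i / sqrt (w i)) + (\<chi> i. v $ i / sqrt (w i))"
    by (simp add: vec_eq_iff add_divide_distrib)
  then show ?thesis unfolding weighted_norm_def by (simp add: norm_triangle_ineq)
qed

lemma weighted_norm_scaleR: "weighted_norm w (c *\<^sub>R v) = \<bar>c\<bar> * weighted_norm w v"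
proof -
  have "(\<chi> i. (c *\<^sub>R v) $ i / sqrt (w i)) = c *\<^sub>R (\<chi> i. v $ i / sqrt (w i))"
    by (simp add: vec_eq_iff)
  then show ?thesis unfolding weighted_norm_def by simp
qed

context
  fixes w :: "'m::finite \<Rightarrow> real"
  assumes weight_pos: "\<And>i. 0 < w i" and weight_le_1: "\<And>i. w i \<le> 1"
begin

lemma norm_le_weighted_norm: "norm v \<le> weighted_norm w v"
proof -
  have "(norm v)\<^sup>2 \<le> (weighted_norm w v)\<^sup>2"
    unfolding weighted_norm_square[OF less_imp_le[OF weight_pos]] norm_square_vec
    using weight_pos weight_le_1 by (intro sum_mono) (simp add: le_divide_eq mult_left_le)
  then show ?thesis using weighted_norm_nonneg by (rule power2_le_imp_le)
qed

lemma weighted_norm_square_le: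
  assumes "\<And>i. wmin \<le> w i"
  shows "wmin * (weighted_norm w v)\<^sup>2 \<le> (norm v)\<^sup>2"
proof -
  have "wmin * ((v $ i)\<^sup>2 / w i) \<le> (v $ i)\<^sup>2" for i
    using assms[of i] weight_pos[of i] by (simp add: divide_le_eq mult.commute mult_right_mono)
  then show ?thesis
    unfolding weighted_norm_square[OF less_imp_le[OF weight_pos]] sum_distrib_left norm_square_vec
    by (rule sum_mono)
qed

lemma weighted_sum_squares_le: "(\<Sum>i\<in>UNIV. w i * (v $ i)\<^sup>2) \<le> (norm v)\<^sup>2"
  unfolding norm_square_vec
  using weight_pos weight_le_1 by (intro sum_mono mult_left_le_one_le) (auto simp: less_imp_le)

lemma weighted_norm_weighted: "weighted_norm w (\<chi> i. w i * v $ i) \<le> norm v"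
proof -
  have "(weighted_norm w (\<chi> i. w i * v $ i))\<^sup>2 = (\<Sum>i\<in>UNIV. w i * (v $ i)\<^sup>2)"
    unfolding weighted_norm_square[OF less_imp_le[OF weight_pos]]
    using weight_pos by (intro sum.cong) (auto simp: power2_eq_square less_imp_neq[THEN not_sym])
  also have "\<dots> \<le> (norm v)\<^sup>2" by (rule weighted_sum_squares_le)
  finally show ?thesis by (rule power2_le_imp_le) simp
qed

text \<open>The weights 1/w of the norm cancel the weights w of the step in the cross term,
  which is therefore the quadratic form of B.\<close>

lemma weighted_norm_step_square:
  fixes B :: "real^'m^'m"
  shows "(weighted_norm w (v - h *\<^sub>R (\<chi> i. w i * (B *v v) $ i)))\<^sup>2
    = (weighted_norm w v)\<^sup>2 - 2 * h * (v \<bullet> (B *v v)) + h\<^sup>2 * (\<Sum>i\<in>UNIV. w i * ((B *v v) $ i)\<^sup>2)"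
proof -
  have "(v $ i - h * (w i * (B *v v) $ i))\<^sup>2 / w i
      = (v $ i)\<^sup>2 / w i - 2 * h * (v $ i * (B *v v) $ i) + h\<^sup>2 * (w i * ((B *v v) $ i)\<^sup>2)" for i
    using weight_pos[of i] by (simp add: power2_eq_square field_simps)
  then show ?thesis
    unfolding weighted_norm_square[OF less_imp_le[OF weight_pos]] inner_vec_def
    by (simp add: sum.distrib sum_subtractf sum_distrib_left)
qed

lemma weighted_norm_contraction:
  fixes B :: "real^'m^'m"
  assumes "0 < wmin" "\<And>i. wmin \<le> w i"
    and coercive: "\<And>u. \<mu> * (norm u)\<^sup>2 \<le> u \<bullet> (B *v u)" and "0 < \<mu>"
    and bounded: "\<And>u. norm (B *v u) \<le> K * norm u"
    and h: "0 < h" "h * K\<^sup>2 \<le> \<mu> * wmin" "h * (\<mu> * wmin) \<le> 1"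
  shows "weighted_norm w (v - h *\<^sub>R (\<chi> i. w i * (B *v v) $ i)) \<le> (1 - h * (\<mu> * wmin / 2)) * weighted_norm w v"
proof -
  have "wmin \<le> 1" using assms(2)[of undefined] weight_le_1[of undefined] by linarith
  have Bv: "(\<Sum>i\<in>UNIV. w i * ((B *v v) $ i)\<^sup>2) \<le> K\<^sup>2 * (norm v)\<^sup>2"
  proof -
    have "(norm (B *v v))\<^sup>2 \<le> (K * norm v)\<^sup>2"
      using bounded[of v] by (intro power_mono) auto
    then show ?thesis using weighted_sum_squares_le[of "B *v v"] by (simp add: power_mult_distrib)
  qed
  have "\<mu> * wmin \<le> \<mu>" using \<open>wmin \<le> 1\<close> \<open>0 < \<mu>\<close> by (simp add: mult_left_le)
  then have "h * K\<^sup>2 \<le> \<mu>" using h(2) by simp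
  then have quad: "h\<^sup>2 * (K\<^sup>2 * (norm v)\<^sup>2) \<le> h * (\<mu> * (norm v)\<^sup>2)"
    using h(1) by (simp add: power2_eq_square mult_right_mono mult.assoc[symmetric])
  have quad': "h\<^sup>2 * (\<Sum>i\<in>UNIV. w i * ((B *v v) $ i)\<^sup>2) \<le> h\<^sup>2 * (K\<^sup>2 * (norm v)\<^sup>2)"
    using Bv by (simp add: mult_left_mono)
  have cross: "2 * h * (\<mu> * (norm v)\<^sup>2) \<le> 2 * h * (v \<bullet> (B *v v))"
    using coercive[of v] h(1) by simp
  have lower: "h * (\<mu> * (wmin * (weighted_norm w v)\<^sup>2)) \<le> h * (\<mu> * (norm v)\<^sup>2)"
    using weighted_norm_square_le[OF assms(2), of v] h(1) \<open>0 < \<mu>\<close> by simp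
  have "(1 - h * (\<mu> * wmin)) * (weighted_norm w v)\<^sup>2
      = (weighted_norm w v)\<^sup>2 - h * (\<mu> * (wmin * (weighted_norm w v)\<^sup>2))"
    by (simp add: algebra_simps)
  then have "(weighted_norm w (v - h *\<^sub>R (\<chi> i. w i * (B *v v) $ i)))\<^sup>2
      \<le> (1 - h * (\<mu> * wmin)) * (weighted_norm w v)\<^sup>2"
    unfolding weighted_norm_step_square using quad quad' cross lower by linarith
  also have "\<dots> \<le> ((1 - h * (\<mu> * wmin / 2)) * weighted_norm w v)\<^sup>2"
  proof -
    have "(1 - h * (\<mu> * wmin / 2))\<^sup>2 = 1 - h * (\<mu> * wmin) + (h * (\<mu> * wmin / 2))\<^sup>2"
      by (simp add: power2_eq_square algebra_simps)
    then have "1 - h * (\<mu> * wmin) \<le> (1 - h * (\<mu> * wmin / 2))\<^sup>2" by simp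
    then show ?thesis unfolding power_mult_distrib by (rule mult_right_mono) simp
  qed
  finally have "(weighted_norm w (v - h *\<^sub>R (\<chi> i. w i * (B *v v) $ i)))\<^sup>2
      \<le> ((1 - h * (\<mu> * wmin / 2)) * weighted_norm w v)\<^sup>2" .
  moreover have "0 \<le> 1 - h * (\<mu> * wmin / 2)"
    using h(3) by linarith
  ultimately show ?thesis
    using weighted_norm_nonneg[of w v] by (auto intro: power2_le_imp_le)
qed

lemma weighted_norm_forced_contraction:
  fixes B :: "real^'m^'m"
  assumes "0 < wmin" "\<And>i. wmin \<le> w i"
    and coercive: "\<And>u. \<mu> * (norm u)\<^sup>2 \<le> u \<bullet> (B *v u)" and "0 < \<mu>"
    and bounded: "\<And>u. norm (B *v u) \<le> K * norm u"
    and h: "0 < h" "h * K\<^sup>2 \<le> \<mu> * wmin" "h * (\<mu> * wmin) \<le> 1"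
  shows "weighted_norm w ((u - h *\<^sub>R (\<chi> i. w i * (B *v u) $ i)) + h *\<^sub>R (\<chi> i. w i * (B *v s) $ i))
    \<le> (1 - h * (\<mu> * wmin / 2)) * weighted_norm w u + h * (K * norm s)"
proof -
  have "weighted_norm w (\<chi> i. w i * (B *v s) $ i) \<le> K * norm s"
    using weighted_norm_weighted[of "B *v s"] bounded[of s] by linarith
  then have "weighted_norm w (h *\<^sub>R (\<chi> i. w i * (B *v s) $ i)) \<le> h * (K * norm s)"
    unfolding weighted_norm_scaleR using \<open>0 < h\<close> by (simp add: mult_left_mono)
  then show ?thesis
    using weighted_norm_triangle weighted_norm_contraction[OF assms] by (meson add_mono order_trans)
qed

end

lemma perturbed_linear_recursion_tendsto_zero:
  fixes e M :: "nat \<Rightarrow> real^'m" and w :: "'m \<Rightarrow> real" and B :: "real^'m^'m"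
    and \<eta> :: "nat \<Rightarrow> real"
  assumes weight_pos: "\<And>i. 0 < w i" and weight_le_1: "\<And>i. w i \<le> 1"
    and "0 < \<mu>" and coercive: "\<And>u. \<mu> * (norm u)\<^sup>2 \<le> u \<bullet> (B *v u)"
    and eta_pos: "\<And>k. 0 < \<eta> k" and eta_lim: "\<eta> \<longlonglongrightarrow> 0" and div: "\<not> summable \<eta>"
    and M_lim: "M \<longlonglongrightarrow> L"
    and recursion: "\<And>k. e (Suc k) = e k - \<eta> k *\<^sub>R (\<chi> i. w i * (B *v e k) $ i) + (M (Suc k) - M k)"
  shows "e \<longlonglongrightarrow> 0"
proof -
  define wmin where "wmin = Min (range w)"
  have "0 < wmin" unfolding wmin_def using weight_pos by (subst Min_gr_iff) auto
  have wmin_le: "wmin \<le> w i" for i unfolding wmin_def by (rule Min_le) auto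
  obtain K where K: "\<And>v. norm (B *v v) \<le> K * norm v"
    using bounded_linear.pos_bounded[OF matrix_vector_mul_bounded_linear[of B]]
    by (auto simp: mult.commute)
  define S where "S k = L - M k" for k
  define u where "u k = e k + S k" for k
  have S_lim: "S \<longlonglongrightarrow> 0"
    unfolding S_def using tendsto_diff[OF tendsto_const M_lim, of L] by simp
  text \<open>Shifting e by the tail S of the perturbation turns the recursion into a contraction
    with a forcing term that vanishes.\<close>
  have u_Suc: "u (Suc k) = (u k - \<eta> k *\<^sub>R (\<chi> i. w i * (B *v u k) $ i)) + \<eta> k *\<^sub>R (\<chi> i. w i * (B *v S k) $ i)"
    for k
    unfolding vec_eq_iff u_def S_def by (simp add: recursion matrix_vector_right_distrib algebra_simps)
  define a where "a k = weighted_norm w (u k)" for k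
  have "eventually (\<lambda>k. \<eta> k * K\<^sup>2 < \<mu> * wmin) sequentially"
    using order_tendstoD(2)[OF tendsto_mult[OF eta_lim tendsto_const, of "K\<^sup>2"], of "\<mu> * wmin"]
      \<open>0 < \<mu>\<close> \<open>0 < wmin\<close> by simp
  moreover have "eventually (\<lambda>k. \<eta> k * (\<mu> * wmin) < 1) sequentially"
    using order_tendstoD(2)[OF tendsto_mult[OF eta_lim tendsto_const, of "\<mu> * wmin"], of 1] by simp
  ultimately have a_Suc: "eventually (\<lambda>k.
      a (Suc k) \<le> (1 - \<mu> * wmin / 2 * \<eta> k) * a k + \<eta> k * (K * norm (S k))) sequentially"
  proof eventually_elim
    case (elim k)
    then show ?case
      unfolding a_def u_Suc
      using weighted_norm_forced_contraction[where w=w, OF weight_pos weight_le_1 \<open>0 < wmin\<close> wmin_le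
          coercive \<open>0 < \<mu>\<close> K eta_pos[of k]]
      by (simp add: mult.commute)
  qed
  have forcing: "(\<lambda>k. K * norm (S k)) \<longlonglongrightarrow> 0"
    using tendsto_mult[OF tendsto_const tendsto_norm[OF S_lim], of K] by simp
  have rate_pos: "0 < \<mu> * wmin / 2" using \<open>0 < \<mu>\<close> \<open>0 < wmin\<close> by simp
  have a_nonneg: "0 \<le> a k" for k by (simp add: a_def weighted_norm_nonneg)
  have "a \<longlonglongrightarrow> 0"
    by (rule perturbed_contraction_tendsto_zero[OF a_nonneg rate_pos eta_pos eta_lim div a_Suc forcing])
  then have "(\<lambda>k. norm (u k)) \<longlonglongrightarrow> 0"
    using tendsto_sandwich[of "\<lambda>_. 0" "\<lambda>k. norm (u k)" sequentially a 0]
    by (simp add: a_def norm_le_weighted_norm[where w=w, OF weight_pos weight_le_1])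
  then have "u \<longlonglongrightarrow> 0" by (simp add: tendsto_norm_zero_iff)
  then have "(\<lambda>k. u k - S k) \<longlonglongrightarrow> 0 - 0" by (rule tendsto_diff[OF _ S_lim])
  then show ?thesis by (simp add: u_def)
qed

lemma discrete_gronwall_bound:
  fixes q s :: "nat \<Rightarrow> real"
  assumes step: "\<And>k. q (Suc k) \<le> (1 + a * s k) * q k + b * s k"
    and q_nonneg: "\<And>k. 0 \<le> q k" and s_nonneg: "\<And>k. 0 \<le> s k" and "0 \<le> a" "0 \<le> b"
    and "summable s"
  shows "q k \<le> exp (a * (\<Sum>j. s j)) * (q 0 + b * (\<Sum>j. s j))"
proof -
  have partial: "q k \<le> exp (a * (\<Sum>j<k. s j)) * (q 0 + b * (\<Sum>j<k. s j))" for k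
  proof (induction k)
    case (Suc k)
    let ?E = "exp (a * (\<Sum>j<k. s j))" and ?P = "q 0 + b * (\<Sum>j<k. s j)"
    have "1 \<le> ?E" using \<open>0 \<le> a\<close> s_nonneg by (simp add: sum_nonneg)
    have "0 \<le> ?P" using q_nonneg \<open>0 \<le> b\<close> s_nonneg by (simp add: sum_nonneg)
    have "q (Suc k) \<le> (1 + a * s k) * (?E * ?P) + b * s k"
      using step[of k] Suc mult_left_mono[OF Suc, of "1 + a * s k"] \<open>0 \<le> a\<close> s_nonneg[of k] by simp
    also have "\<dots> \<le> exp (a * s k) * (?E * ?P) + exp (a * s k) * ?E * (b * s k)"
    proof (rule add_mono)
      show "(1 + a * s k) * (?E * ?P) \<le> exp (a * s k) * (?E * ?P)"
        using \<open>0 \<le> ?P\<close> by (intro mult_right_mono exp_ge_add_one_self) simp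
      have "1 \<le> exp (a * s k)" using \<open>0 \<le> a\<close> s_nonneg[of k] by simp
      then have "1 \<le> exp (a * s k) * ?E" using mult_mono[OF _ \<open>1 \<le> ?E\<close>] by simp
      then show "b * s k \<le> exp (a * s k) * ?E * (b * s k)"
        using mult_right_mono[of 1 "exp (a * s k) * ?E" "b * s k"] \<open>0 \<le> b\<close> s_nonneg[of k] by simp
    qed
    also have "\<dots> = exp (a * (\<Sum>j<Suc k. s j)) * (q 0 + b * (\<Sum>j<Suc k. s j))"
      by (simp add: exp_add[symmetric] algebra_simps)
    finally show ?case .
  qed simp
  have "(\<Sum>j<k. s j) \<le> (\<Sum>j. s j)"
    using sum_le_suminf[OF \<open>summable s\<close>] s_nonneg by simp
  then have "exp (a * (\<Sum>j<k. s j)) * (q 0 + b * (\<Sum>j<k. s j))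
      \<le> exp (a * (\<Sum>j. s j)) * (q 0 + b * (\<Sum>j. s j))"
    using \<open>0 \<le> a\<close> \<open>0 \<le> b\<close> q_nonneg[of 0] s_nonneg
    by (intro mult_mono add_left_mono mult_left_mono) (simp_all add: sum_nonneg mult_left_mono)
  with partial[of k] show ?thesis by linarith
qed

lemma quadratic_form_mult_transpose:
  fixes A :: "real^'n^'m"
  shows "u \<bullet> ((A ** transpose A) *v u) = (norm (transpose A *v u))\<^sup>2"
  by (simp add: matrix_vector_mul_assoc[symmetric] dot_lmul_matrix[symmetric] power2_norm_eq_inner)

lemma mult_transpose_coercive:
  fixes A :: "real^'n^'m"
  assumes "rank A = CARD('m)"
  obtains \<mu> where "0 < \<mu>" "\<And>u. \<mu> * (norm u)\<^sup>2 \<le> u \<bullet> ((A ** transpose A) *v u)"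
proof -
  have "rank (transpose A) = CARD('m)" using assms rank_transpose by metis
  then have "inj ((*v) (transpose A))" by (simp add: full_rank_injective)
  then obtain \<beta> where "0 < \<beta>" and \<beta>: "\<And>x. \<beta> * norm x \<le> norm (transpose A *v x)"
    using linear_inj_bounded_below_pos[OF matrix_vector_mul_linear] by blast
  have "(\<beta> * norm u)\<^sup>2 \<le> (norm (transpose A *v u))\<^sup>2" for u
    using \<beta>[of u] \<open>0 < \<beta>\<close> by (intro power_mono) auto
  then show thesis
    using \<open>0 < \<beta>\<close> by (intro that[of "\<beta>\<^sup>2"]) (simp_all add: quadratic_form_mult_transpose power_mult_distrib)
qed

lemma mult_transpose_matrix_inv:
  fixes A :: "real^'n^'m"
  assumes "rank A = CARD('m)"
  shows "(A ** transpose A) *v (matrix_inv (A ** transpose A) *v v) = v"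
proof -
  obtain \<mu> where "0 < \<mu>" and \<mu>: "\<And>u. \<mu> * (norm u)\<^sup>2 \<le> u \<bullet> ((A ** transpose A) *v u)"
    using mult_transpose_coercive[OF assms] by blast
  have "inj ((*v) (A ** transpose A))"
  proof (rule injI)
    fix x y assume "(A ** transpose A) *v x = (A ** transpose A) *v y"
    then have "(A ** transpose A) *v (x - y) = 0" by (simp add: matrix_vector_mult_diff_distrib)
    then have "\<mu> * (norm (x - y))\<^sup>2 \<le> 0" using \<mu>[of "x - y"] by simp
    then show "x = y" using \<open>0 < \<mu>\<close> by (simp add: mult_le_0_iff)
  qed
  then have "invertible (A ** transpose A)"
    using matrix_left_invertible_injective invertible_left_inverse by blast
  then have "(A ** transpose A) ** matrix_inv (A ** transpose A) = mat 1"
    unfolding invertible_def matrix_inv_def by (metis (mono_tags, lifting) someI_ex)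
  then show ?thesis by (simp add: matrix_vector_mul_assoc)
qed

lemma unit_diag_mult_vec: "(unit_diag j *v v) $ i = (if i = j then v $ j else 0)"
proof (cases "i = j")
  case True
  have "(unit_diag j *v v) $ i = (\<Sum>l\<in>UNIV. (if l = j then 1 else 0) * v $ l)"
    unfolding unit_diag_def matrix_vector_mult_def using True by (auto intro!: sum.cong)
  also have "\<dots> = (\<Sum>l\<in>UNIV. if l = j then v $ l else 0)" by (rule sum.cong) auto
  finally show ?thesis using True by simp
qed (simp add: unit_diag_def matrix_vector_mult_def)

lemma Int_stable_vimage_sets: "Int_stable {f -` B \<inter> \<Omega> | B. B \<in> sets N}"
  unfolding Int_stable_def
proof clarify
  fix B1 B2 assume "B1 \<in> sets N" "B2 \<in> sets N"
  then show "\<exists>B. f -` B1 \<inter> \<Omega> \<inter> (f -` B2 \<inter> \<Omega>) = f -` B \<inter> \<Omega> \<and> B \<in> sets N"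
    by (intro exI[of _ "B1 \<inter> B2"]) auto
qed

lemma integral_eq_if_distr_eq:
  fixes h :: "'b \<Rightarrow> real"
  assumes "f \<in> measurable M N" "g \<in> measurable M N" "distr M N f = distr M N g"
    and "h \<in> borel_measurable N"
  shows "(\<integral>x. h (f x) \<partial>M) = (\<integral>x. h (g x) \<partial>M)"
    and "integrable M (\<lambda>x. h (f x)) \<longleftrightarrow> integrable M (\<lambda>x. h (g x))"
  using integral_distr[OF assms(1,4)] integral_distr[OF assms(2,4)]
    integrable_distr_eq[OF assms(1,4)] integrable_distr_eq[OF assms(2,4)] assms(3) by simp_all

section \<open>The randomized Kaczmarz iteration\<close>

lemma (in prob_space) indep_set_mono:
  "indep_set SA SB \<Longrightarrow> SA' \<subseteq> SA \<Longrightarrow> SB' \<subseteq> SB \<Longrightarrow> indep_set SA' SB'"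
  unfolding indep_set_def by (rule indep_sets_mono_sets) (auto split: bool.split)

locale kaczmarz_iteration = prob_space M for M :: "'w measure" +
  fixes A :: "real^'n^'m"
    and X :: "'w \<Rightarrow> real^'n" and W :: "'w \<Rightarrow> real^'m" and Z :: "'w \<Rightarrow> 'm"
    and Xs :: "nat \<Rightarrow> 'w \<Rightarrow> real^'n" and Ws :: "nat \<Rightarrow> 'w \<Rightarrow> real^'m"
    and Zs :: "nat \<Rightarrow> 'w \<Rightarrow> 'm"
    and \<eta> :: "nat \<Rightarrow> real" and x0 :: "real^'n"
    and \<alpha> :: "nat \<Rightarrow> 'w \<Rightarrow> real^'m"
  assumes full_rank: "rank A = CARD('m)"
    and X_meas: "X \<in> borel_measurable M"
    and X_sq: "integrable M (\<lambda>\<omega>. (norm (X \<omega>))\<^sup>2)"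
    and W_meas: "W \<in> borel_measurable M"
    and W_sq: "integrable M (\<lambda>\<omega>. (norm (W \<omega>))\<^sup>2)"
    and Z_meas: "Z \<in> measurable M (count_space UNIV)"
    and Z_pos: "\<forall>i. measure M {\<omega> \<in> space M. Z \<omega> = i} > 0"
    and Xs_meas: "\<forall>k\<ge>1. Xs k \<in> borel_measurable M"
    and Ws_meas: "\<forall>k\<ge>1. Ws k \<in> borel_measurable M"
    and Zs_meas: "\<forall>k\<ge>1. Zs k \<in> measurable M (count_space UNIV)"
    and Xs_distr: "\<forall>k\<ge>1. distr M borel (Xs k) = distr M borel X"
    and Ws_distr: "\<forall>k\<ge>1. distr M borel (Ws k) = distr M borel W"
    and Zs_distr: "\<forall>k\<ge>1. distr M (count_space UNIV) (Zs k) = distr M (count_space UNIV) Z"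
    and indep: "indep_sets (kacz_events M Xs Ws Zs)
                  ({IX k | k. k \<ge> 1} \<union> {IW k | k. k \<ge> 1} \<union> {IZ k | k. k \<ge> 1})"
    and eta_pos: "\<forall>k. \<eta> k > 0"
    and eta_div: "\<not> summable \<eta>"
    and eta_sq: "summable (\<lambda>k. (\<eta> k)\<^sup>2)"
    and alpha0: "\<forall>\<omega>. \<alpha> 0 \<omega> = 0"
    and alpha_rec: "\<forall>k \<omega>. \<alpha> (Suc k) \<omega> = \<alpha> k \<omega> + \<eta> k *\<^sub>R
          ((\<chi> i. if i = Zs (Suc k) \<omega>
                  then (A *v Xs (Suc k) \<omega> + Ws (Suc k) \<omega>) $ Zs (Suc k) \<omega> else 0)
           - unit_diag (Zs (Suc k) \<omega>) *v (A *v (x0 + transpose A *v \<alpha> k \<omega>)))"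
begin

definition sample_indices :: "kidx set" where
  "sample_indices = {IX k | k. k \<ge> 1} \<union> {IW k | k. k \<ge> 1} \<union> {IZ k | k. k \<ge> 1}"

definition generated :: "kidx set \<Rightarrow> 'w measure" where
  "generated S = sigma (space M) (\<Union>(kacz_events M Xs Ws Zs ` S))"

lemma kacz_events_sets: "i \<in> sample_indices \<Longrightarrow> kacz_events M Xs Ws Zs i \<subseteq> events"
  using indep unfolding indep_sets_def sample_indices_def by blast

lemma Int_stable_kacz_events: "Int_stable (kacz_events M Xs Ws Zs i)"
  unfolding kacz_events_def by (cases i) (simp_all only: kidx.case Int_stable_vimage_sets)

lemma sets_generated:
  "S \<subseteq> sample_indices \<Longrightarrow> sets (generated S) = sigma_sets (space M) (\<Union>(kacz_events M Xs Ws Zs ` S))"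
  unfolding generated_def
  by (rule sets_measure_of) (use kacz_events_sets sets.sets_into_space in blast)

lemma space_generated [simp]: "space (generated S) = space M"
  unfolding generated_def by (rule space_measure_of_conv)

lemma subalgebra_generated:
  assumes "S \<subseteq> sample_indices" shows "subalgebra M (generated S)"
proof -
  have "\<Union>(kacz_events M Xs Ws Zs ` S) \<subseteq> sets M" using kacz_events_sets assms by blast
  then show ?thesis
    unfolding subalgebra_def by (simp add: sets_generated[OF assms] sets.sigma_sets_subset)
qed

lemma subalgebra_generated_mono:
  assumes "S \<subseteq> S'" "S' \<subseteq> sample_indices" shows "subalgebra (generated S') (generated S)"
  unfolding subalgebra_def using assms
  by (simp add: sets_generated sigma_sets_mono' Union_mono image_mono)

lemma measurable_generated_mono:
  "f \<in> borel_measurable (generated S) \<Longrightarrow> S \<subseteq> S' \<Longrightarrow> S' \<subseteq> sample_indices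
    \<Longrightarrow> f \<in> borel_measurable (generated S')"
  using measurable_from_subalg[OF subalgebra_generated_mono] by blast

lemma measurable_generated_M:
  "f \<in> borel_measurable (generated S) \<Longrightarrow> S \<subseteq> sample_indices \<Longrightarrow> f \<in> borel_measurable M"
  using measurable_from_subalg[OF subalgebra_generated] by blast

lemma kacz_events_generated:
  assumes "a \<in> kacz_events M Xs Ws Zs i" "i \<in> S" "S \<subseteq> sample_indices"
  shows "a \<in> sets (generated S)"
  using assms by (auto simp: sets_generated)

lemma Xs_measurable_generated:
  assumes "IX j \<in> S" "S \<subseteq> sample_indices" shows "Xs j \<in> borel_measurable (generated S)"
proof (rule measurableI)
  fix B :: "(real^'n) set" assume "B \<in> sets borel"
  then have "Xs j -` B \<inter> space M \<in> kacz_events M Xs Ws Zs (IX j)" by (auto simp: kacz_events_def)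
  then show "Xs j -` B \<inter> space (generated S) \<in> sets (generated S)"
    using kacz_events_generated assms by simp
qed simp

lemma Ws_measurable_generated:
  assumes "IW j \<in> S" "S \<subseteq> sample_indices" shows "Ws j \<in> borel_measurable (generated S)"
proof (rule measurableI)
  fix B :: "(real^'m) set" assume "B \<in> sets borel"
  then have "Ws j -` B \<inter> space M \<in> kacz_events M Xs Ws Zs (IW j)" by (auto simp: kacz_events_def)
  then show "Ws j -` B \<inter> space (generated S) \<in> sets (generated S)"
    using kacz_events_generated assms by simp
qed simp

lemma Zs_measurable_generated:
  assumes "IZ j \<in> S" "S \<subseteq> sample_indices"
  shows "Zs j \<in> measurable (generated S) (count_space UNIV)"
proof (rule measurableI)
  fix B :: "'m set" assume "B \<in> sets (count_space UNIV)"
  then have "Zs j -` B \<inter> space M \<in> kacz_events M Xs Ws Zs (IZ j)" by (auto simp: kacz_events_def)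
  then show "Zs j -` B \<inter> space (generated S) \<in> sets (generated S)"
    using kacz_events_generated assms by simp
qed simp

lemma indep_set_generated:
  assumes P: "P \<subseteq> sample_indices" and Q: "Q \<subseteq> sample_indices" and "P \<inter> Q = {}"
  shows "indep_set (sets (generated P)) (sets (generated Q))"
proof -
  define I where "I b = (if b then P else Q)" for b
  have "indep_sets (kacz_events M Xs Ws Zs) (\<Union>b\<in>UNIV. I b)"
    by (rule indep_sets_mono_index[OF _ indep[folded sample_indices_def]])
       (use P Q in \<open>auto simp: I_def\<close>)
  moreover have "disjoint_family_on I UNIV"
    using \<open>P \<inter> Q = {}\<close> unfolding disjoint_family_on_def I_def by auto
  ultimately have "indep_sets (\<lambda>b. sigma_sets (space M) (\<Union>i\<in>I b. kacz_events M Xs Ws Zs i)) UNIV"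
    by (intro indep_sets_collect_sigma) (auto intro: Int_stable_kacz_events)
  then show ?thesis unfolding indep_set_def
    by (rule indep_sets_cong[THEN iffD1, rotated 2])
       (auto simp: I_def sets_generated P Q split: bool.split)
qed

lemma integral_mult_indep_generated:
  fixes f g :: "'w \<Rightarrow> real"
  assumes P: "P \<subseteq> sample_indices" and Q: "Q \<subseteq> sample_indices" and "P \<inter> Q = {}"
    and f: "f \<in> borel_measurable (generated P)" and g: "g \<in> borel_measurable (generated Q)"
    and "integrable M f" "integrable M g"
  shows "(\<integral>x. f x * g x \<partial>M) = (\<integral>x. f x \<partial>M) * (\<integral>x. g x \<partial>M)"
proof -
  have vimage_sets: "sigma_sets (space M) {h -` U \<inter> space M | U. U \<in> sets borel} \<subseteq> sets (generated S)"
    if "h \<in> borel_measurable (generated S)" "S \<subseteq> sample_indices" for h :: "'w \<Rightarrow> real" and S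
  proof -
    have "{h -` U \<inter> space M | U. U \<in> sets borel} \<subseteq> sets (generated S)"
      using measurable_sets[OF that(1)] by auto
    then show ?thesis using sets.sigma_sets_subset[of _ "generated S"] by simp
  qed
  have "indep_var borel f borel g"
    unfolding indep_var_eq
    using measurable_generated_M[OF f P] measurable_generated_M[OF g Q]
      indep_set_mono[OF indep_set_generated[OF P Q \<open>P \<inter> Q = {}\<close>] vimage_sets[OF f P] vimage_sets[OF g Q]]
    by simp
  then show ?thesis using indep_var_lebesgue_integral assms(6,7) by blast
qed

definition row_prob :: "'m \<Rightarrow> real" where
  "row_prob i = measure M {\<omega> \<in> space M. Z \<omega> = i}"

definition mean_Y :: "real^'m" where
  "mean_Y = (\<integral>\<omega>. A *v X \<omega> + W \<omega> \<partial>M)"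

definition gram :: "real^'m^'m" where
  "gram = A ** transpose A"

definition alpha_star :: "real^'m" where
  "alpha_star = matrix_inv gram *v (mean_Y - A *v x0)"

definition err :: "nat \<Rightarrow> 'w \<Rightarrow> real^'m" where
  "err k \<omega> = \<alpha> k \<omega> - alpha_star"

definition noise :: "nat \<Rightarrow> 'w \<Rightarrow> real^'m" where
  "noise k \<omega> = A *v Xs k \<omega> + Ws k \<omega> - mean_Y"

definition selected :: "nat \<Rightarrow> 'm \<Rightarrow> 'w \<Rightarrow> real" where
  "selected k i \<omega> = (if Zs k \<omega> = i then 1 else 0)"

definition drift :: "nat \<Rightarrow> 'm \<Rightarrow> 'w \<Rightarrow> real" where
  "drift k i \<omega> = (gram *v err k \<omega>) $ i"

lemma gram_alpha_star: "gram *v alpha_star = mean_Y - A *v x0"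
  unfolding alpha_star_def gram_def by (rule mult_transpose_matrix_inv[OF full_rank])

lemma err_Suc:
  "err (Suc k) \<omega> $ i = err k \<omega> $ i + \<eta> k * selected (Suc k) i \<omega> * (noise (Suc k) \<omega> $ i - drift k i \<omega>)"
proof -
  have "A *v (x0 + transpose A *v \<alpha> k \<omega>) = A *v x0 + gram *v \<alpha> k \<omega>"
    by (simp only: matrix_vector_right_distrib matrix_vector_mul_assoc gram_def)
  also have "gram *v \<alpha> k \<omega> = gram *v err k \<omega> + (mean_Y - A *v x0)"
    by (simp add: err_def matrix_vector_mult_diff_distrib gram_alpha_star[symmetric])
  finally have obs: "A *v (x0 + transpose A *v \<alpha> k \<omega>) = mean_Y + gram *v err k \<omega>"
    by (simp add: algebra_simps)
  have "\<alpha> (Suc k) \<omega> $ i = \<alpha> k \<omega> $ i + \<eta> k *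
      ((if i = Zs (Suc k) \<omega> then (A *v Xs (Suc k) \<omega> + Ws (Suc k) \<omega>) $ Zs (Suc k) \<omega> else 0)
       - (if i = Zs (Suc k) \<omega> then (mean_Y + gram *v err k \<omega>) $ Zs (Suc k) \<omega> else 0))"
    using alpha_rec unfolding obs[symmetric] by (simp add: unit_diag_mult_vec)
  then show ?thesis
    by (cases "Zs (Suc k) \<omega> = i") (auto simp: err_def noise_def selected_def drift_def algebra_simps)
qed

lemma row_prob_pos: "0 < row_prob i"
  using Z_pos by (simp add: row_prob_def)

lemma row_prob_le_1: "row_prob i \<le> 1"
  unfolding row_prob_def by (rule prob_le_1)

lemma selected_measurable:
  "Zs j \<in> measurable N (count_space UNIV) \<Longrightarrow> selected j i \<in> borel_measurable N"
  unfolding selected_def[abs_def]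
  by (rule measurable_compose[where f="Zs j" and g="\<lambda>z. if z = i then 1 else (0::real)"]) auto

lemma selected_square: "(selected j i \<omega>)\<^sup>2 = selected j i \<omega>"
  and abs_selected_le_1: "\<bar>selected j i \<omega>\<bar> \<le> 1"
  by (auto simp: selected_def)

lemma integral_selected:
  assumes "1 \<le> k" shows "(\<integral>\<omega>. selected k i \<omega> \<partial>M) = row_prob i"
proof -
  have Zs: "Zs k \<in> measurable M (count_space UNIV)" using Zs_meas assms by auto
  have "(\<integral>\<omega>. selected k i \<omega> \<partial>M) = (\<integral>\<omega>. indicator (Zs k -` {i} \<inter> space M) \<omega> \<partial>M)"
    by (rule Bochner_Integration.integral_cong) (auto simp: selected_def indicator_def)
  also have "\<dots> = measure M (Zs k -` {i} \<inter> space M)"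
    using measurable_sets[OF Zs, of "{i}"] by simp
  also have "\<dots> = measure (distr M (count_space UNIV) (Zs k)) {i}"
    by (rule measure_distr[symmetric, OF Zs]) simp
  also have "\<dots> = measure M (Z -` {i} \<inter> space M)"
    using Zs_distr assms by (simp add: measure_distr[OF Z_meas])
  finally show ?thesis by (simp add: row_prob_def vimage_def Int_def conj_commute)
qed

lemma bounded_linear_row: "bounded_linear (\<lambda>x. (A *v x) $ i)"
  by (rule bounded_linear_compose[OF bounded_linear_vec_nth matrix_vector_mul_bounded_linear])

lemma borel_measurable_bounded_linear: "bounded_linear T \<Longrightarrow> T \<in> borel_measurable borel"
  by (rule borel_measurable_continuous_onI[OF linear_continuous_on])

lemma Xs_square_integrable_norm: "1 \<le> k \<Longrightarrow> integrable M (\<lambda>\<omega>. (norm (Xs k \<omega>))\<^sup>2)"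
  using integral_eq_if_distr_eq(2)[of "Xs k" M borel X "\<lambda>x. (norm x)\<^sup>2"] Xs_meas X_meas Xs_distr X_sq
  by simp

lemma Ws_square_integrable_norm: "1 \<le> k \<Longrightarrow> integrable M (\<lambda>\<omega>. (norm (Ws k \<omega>))\<^sup>2)"
  using integral_eq_if_distr_eq(2)[of "Ws k" M borel W "\<lambda>x. (norm x)\<^sup>2"] Ws_meas W_meas Ws_distr W_sq
  by simp

lemma mean_Y_nth: "mean_Y $ i = (\<integral>\<omega>. (A *v X \<omega>) $ i \<partial>M) + (\<integral>\<omega>. W \<omega> $ i \<partial>M)"
proof -
  have X: "integrable M X" by (rule integrable_if_norm_square_integrable[OF X_meas X_sq])
  have W: "integrable M W" by (rule integrable_if_norm_square_integrable[OF W_meas W_sq])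
  have AX: "integrable M (\<lambda>\<omega>. A *v X \<omega>)"
    by (rule integrable_bounded_linear[OF matrix_vector_mul_bounded_linear X])
  have "mean_Y $ i = (\<integral>\<omega>. (A *v X \<omega>) $ i + W \<omega> $ i \<partial>M)"
    unfolding mean_Y_def
    using integral_bounded_linear[OF bounded_linear_vec_nth, of M "\<lambda>\<omega>. A *v X \<omega> + W \<omega>" i] AX W
    by simp
  also have "\<dots> = (\<integral>\<omega>. (A *v X \<omega>) $ i \<partial>M) + (\<integral>\<omega>. W \<omega> $ i \<partial>M)"
    by (rule Bochner_Integration.integral_add)
       (use integrable_bounded_linear[OF bounded_linear_row X]
          integrable_bounded_linear[OF bounded_linear_vec_nth W] in auto)
  finally show ?thesis .
qed

lemma noise_nth: "noise k \<omega> $ i = (A *v Xs k \<omega>) $ i + Ws k \<omega> $ i - mean_Y $ i"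
  by (simp add: noise_def)

lemma square_integrable_AXs: "1 \<le> k \<Longrightarrow> square_integrable (\<lambda>\<omega>. (A *v Xs k \<omega>) $ i)"
  using square_integrable_bounded_linear[OF bounded_linear_row _ Xs_square_integrable_norm] Xs_meas
  by simp

lemma square_integrable_Ws: "1 \<le> k \<Longrightarrow> square_integrable (\<lambda>\<omega>. Ws k \<omega> $ i)"
  using square_integrable_bounded_linear[OF bounded_linear_vec_nth _ Ws_square_integrable_norm] Ws_meas
  by simp

lemma square_integrable_noise: "1 \<le> k \<Longrightarrow> square_integrable (\<lambda>\<omega>. noise k \<omega> $ i)"
  unfolding noise_nth
  by (intro square_integrable_diff square_integrable_add square_integrable_AXs square_integrable_Ws
      square_integrable_const)

lemma integral_noise: assumes "1 \<le> k" shows "(\<integral>\<omega>. noise k \<omega> $ i \<partial>M) = 0"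
proof -
  have "(\<integral>\<omega>. noise k \<omega> $ i \<partial>M)
      = (\<integral>\<omega>. (A *v Xs k \<omega>) $ i \<partial>M) + (\<integral>\<omega>. Ws k \<omega> $ i \<partial>M) - mean_Y $ i"
    unfolding noise_nth
    using square_integrable_integrable[OF square_integrable_AXs[OF assms]]
      square_integrable_integrable[OF square_integrable_Ws[OF assms]]
    by (simp add: prob_space)
  also have "(\<integral>\<omega>. (A *v Xs k \<omega>) $ i \<partial>M) = (\<integral>\<omega>. (A *v X \<omega>) $ i \<partial>M)"
    using integral_eq_if_distr_eq(1)[OF _ X_meas _ borel_measurable_bounded_linear[OF bounded_linear_row]]
      Xs_meas Xs_distr assms by simp
  also have "(\<integral>\<omega>. Ws k \<omega> $ i \<partial>M) = (\<integral>\<omega>. W \<omega> $ i \<partial>M)"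
    using integral_eq_if_distr_eq(1)[OF _ W_meas _ borel_measurable_bounded_linear[OF bounded_linear_vec_nth]]
      Ws_meas Ws_distr assms by simp
  finally show ?thesis by (simp add: mean_Y_nth)
qed

text \<open>Only the marginal laws of X_k and W_k are fixed, so the second moment of the noise is
  bounded through (a + b - c)^2 \<le> 3 (a^2 + b^2 + c^2) rather than computed.\<close>

definition noise_bound :: "'m \<Rightarrow> real" where
  "noise_bound i =
    3 * ((\<integral>\<omega>. ((A *v X \<omega>) $ i)\<^sup>2 \<partial>M) + (\<integral>\<omega>. (W \<omega> $ i)\<^sup>2 \<partial>M) + (mean_Y $ i)\<^sup>2)"

lemma noise_bound_nonneg: "0 \<le> noise_bound i"
  unfolding noise_bound_def by (intro mult_nonneg_nonneg add_nonneg_nonneg integral_nonneg_AE) auto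

lemma integral_noise_square_le:
  assumes "1 \<le> k" shows "(\<integral>\<omega>. (noise k \<omega> $ i)\<^sup>2 \<partial>M) \<le> noise_bound i"
proof -
  let ?a = "\<lambda>\<omega>. (A *v Xs k \<omega>) $ i" and ?b = "\<lambda>\<omega>. Ws k \<omega> $ i" and ?c = "mean_Y $ i"
  have ia: "integrable M (\<lambda>\<omega>. (?a \<omega>)\<^sup>2)" using square_integrable_square[OF square_integrable_AXs[OF assms]] .
  have ib: "integrable M (\<lambda>\<omega>. (?b \<omega>)\<^sup>2)" using square_integrable_square[OF square_integrable_Ws[OF assms]] .
  have "(\<integral>\<omega>. (noise k \<omega> $ i)\<^sup>2 \<partial>M) \<le> (\<integral>\<omega>. 3 * ((?a \<omega>)\<^sup>2 + (?b \<omega>)\<^sup>2 + ?c\<^sup>2) \<partial>M)"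
  proof (rule integral_mono)
    show "integrable M (\<lambda>\<omega>. (noise k \<omega> $ i)\<^sup>2)"
      using square_integrable_square[OF square_integrable_noise[OF assms]] .
    show "integrable M (\<lambda>\<omega>. 3 * ((?a \<omega>)\<^sup>2 + (?b \<omega>)\<^sup>2 + ?c\<^sup>2))" using ia ib by simp
    fix \<omega>
    have "0 \<le> (?a \<omega> - ?b \<omega>)\<^sup>2 + (?a \<omega> + ?c)\<^sup>2 + (?b \<omega> + ?c)\<^sup>2" by simp
    then show "(noise k \<omega> $ i)\<^sup>2 \<le> 3 * ((?a \<omega>)\<^sup>2 + (?b \<omega>)\<^sup>2 + ?c\<^sup>2)"
      by (simp add: noise_nth power2_eq_square algebra_simps)
  qed
  also have "\<dots> = 3 * ((\<integral>\<omega>. (?a \<omega>)\<^sup>2 \<partial>M) + (\<integral>\<omega>. (?b \<omega>)\<^sup>2 \<partial>M) + ?c\<^sup>2)"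
    using ia ib by (simp add: prob_space)
  also have "(\<integral>\<omega>. (?a \<omega>)\<^sup>2 \<partial>M) = (\<integral>\<omega>. ((A *v X \<omega>) $ i)\<^sup>2 \<partial>M)"
    using integral_eq_if_distr_eq(1)[OF _ X_meas, where h="\<lambda>x. ((A *v x) $ i)\<^sup>2"]
      borel_measurable_bounded_linear[OF bounded_linear_row] Xs_meas Xs_distr assms by simp
  also have "(\<integral>\<omega>. (?b \<omega>)\<^sup>2 \<partial>M) = (\<integral>\<omega>. (W \<omega> $ i)\<^sup>2 \<partial>M)"
    using integral_eq_if_distr_eq(1)[OF _ W_meas, where h="\<lambda>x. (x $ i)\<^sup>2"]
      borel_measurable_bounded_linear[OF bounded_linear_vec_nth] Ws_meas Ws_distr assms by simp
  finally show ?thesis unfolding noise_bound_def .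
qed

definition past :: "nat \<Rightarrow> kidx set" where
  "past k = {IX j |j. 1 \<le> j \<and> j \<le> k} \<union> {IW j |j. 1 \<le> j \<and> j \<le> k} \<union> {IZ j |j. 1 \<le> j \<and> j \<le> k}"

definition history :: "nat \<Rightarrow> 'w measure" where
  "history k = generated (past k)"

lemma past_sample_indices: "past k \<subseteq> sample_indices"
  unfolding past_def sample_indices_def by auto

lemma past_mono: "past k \<subseteq> past (Suc k)"
  unfolding past_def by auto

lemma past_Suc: "IX (Suc k) \<in> past (Suc k)" "IW (Suc k) \<in> past (Suc k)" "IZ (Suc k) \<in> past (Suc k)"
  unfolding past_def by auto

lemma measurable_history_mono:
  "f \<in> borel_measurable (history k) \<Longrightarrow> f \<in> borel_measurable (history (Suc k))"
  unfolding history_def using measurable_generated_mono[OF _ past_mono past_sample_indices] .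

lemma noise_measurable_generated:
  assumes "IX j \<in> S" "IW j \<in> S" "S \<subseteq> sample_indices"
  shows "(\<lambda>\<omega>. noise j \<omega> $ i) \<in> borel_measurable (generated S)"
  unfolding noise_nth
  using borel_measurable_continuous_on[OF linear_continuous_on[OF bounded_linear_row]
      Xs_measurable_generated[OF assms(1,3)]]
    borel_measurable_continuous_on[OF linear_continuous_on[OF bounded_linear_vec_nth]
      Ws_measurable_generated[OF assms(2,3)]]
  by measurable

lemma selected_measurable_history: "selected (Suc k) i \<in> borel_measurable (history (Suc k))"
  unfolding history_def
  by (rule selected_measurable[OF Zs_measurable_generated[OF past_Suc(3) past_sample_indices]])

lemma noise_measurable_history: "(\<lambda>\<omega>. noise (Suc k) \<omega> $ i) \<in> borel_measurable (history (Suc k))"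
  unfolding history_def by (rule noise_measurable_generated[OF past_Suc(1,2) past_sample_indices])

lemma square_integrable_selected: "1 \<le> j \<Longrightarrow> square_integrable (selected j i)"
  using square_integrable_bounded_mult[OF square_integrable_const[of 1], of "selected j i"]
    selected_measurable Zs_meas abs_selected_le_1 by simp

lemma gram_mult_nth: "(gram *v v) $ i = (\<Sum>l\<in>UNIV. gram $ i $ l * v $ l)"
  by (simp add: matrix_vector_mult_def)

lemma err_measurable_square_integrable:
  "(\<lambda>\<omega>. err k \<omega> $ i) \<in> borel_measurable (history k) \<and> square_integrable (\<lambda>\<omega>. err k \<omega> $ i)"
proof (induction k arbitrary: i)
  case 0
  then show ?case by (simp add: err_def alpha0 square_integrable_const)
next
  case (Suc k)
  have err_eq: "(\<lambda>\<omega>. err (Suc k) \<omega> $ i) = (\<lambda>\<omega>. err k \<omega> $ i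
      + \<eta> k * (selected (Suc k) i \<omega> * (noise (Suc k) \<omega> $ i - (\<Sum>l\<in>UNIV. gram $ i $ l * err k \<omega> $ l))))"
    by (simp add: err_Suc drift_def gram_mult_nth fun_eq_iff mult.assoc)
  have [measurable]: "(\<lambda>\<omega>. err k \<omega> $ l) \<in> borel_measurable (history (Suc k))" for l
    using Suc.IH measurable_history_mono by blast
  have [measurable]: "selected (Suc k) i \<in> borel_measurable (history (Suc k))"
    "(\<lambda>\<omega>. noise (Suc k) \<omega> $ i) \<in> borel_measurable (history (Suc k))"
    by (rule selected_measurable_history noise_measurable_history)+
  have "(\<lambda>\<omega>. err (Suc k) \<omega> $ i) \<in> borel_measurable (history (Suc k))"
    unfolding err_eq by measurable
  moreover have "square_integrable (\<lambda>\<omega>. err (Suc k) \<omega> $ i)"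
    unfolding err_eq using Suc.IH Zs_meas
    by (intro square_integrable_add square_integrable_cmult square_integrable_bounded_mult
        square_integrable_diff square_integrable_noise square_integrable_sum selected_measurable)
       (auto simp: abs_selected_le_1)
  ultimately show ?case ..
qed

lemma err_measurable: "(\<lambda>\<omega>. err k \<omega> $ i) \<in> borel_measurable (history k)"
  and square_integrable_err: "square_integrable (\<lambda>\<omega>. err k \<omega> $ i)"
  using err_measurable_square_integrable by blast+

lemma drift_measurable: "drift k i \<in> borel_measurable (history k)"
  unfolding drift_def[abs_def] gram_mult_nth using err_measurable by measurable

lemma square_integrable_drift: "square_integrable (drift k i)"
  unfolding drift_def[abs_def] gram_mult_nth
  by (intro square_integrable_sum square_integrable_cmult square_integrable_err)

text \<open>The two uses of independence: the row chosen at step k+1 is independent of the history,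
  and the sample observed at step k+1 is independent of both.\<close>

lemma integral_mult_selected:
  assumes "f \<in> borel_measurable (history k)" "integrable M f"
  shows "(\<integral>\<omega>. f \<omega> * selected (Suc k) i \<omega> \<partial>M) = (\<integral>\<omega>. f \<omega> \<partial>M) * row_prob i"
proof -
  have Z: "{IZ (Suc k)} \<subseteq> sample_indices" and disj: "past k \<inter> {IZ (Suc k)} = {}"
    by (auto simp: sample_indices_def past_def)
  have "(\<integral>\<omega>. f \<omega> * selected (Suc k) i \<omega> \<partial>M) = (\<integral>\<omega>. f \<omega> \<partial>M) * (\<integral>\<omega>. selected (Suc k) i \<omega> \<partial>M)"
    by (rule integral_mult_indep_generated[OF past_sample_indices Z disj assms(1)[unfolded history_def]
          selected_measurable[OF Zs_measurable_generated[OF _ Z]] assms(2)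
          square_integrable_integrable[OF square_integrable_selected]]) simp_all
  then show ?thesis using integral_selected[of "Suc k" i] by simp
qed

lemma integral_mult_noise:
  assumes "g \<in> borel_measurable (generated (past k \<union> {IZ (Suc k)}))" "integrable M g"
  shows "(\<integral>\<omega>. g \<omega> * noise (Suc k) \<omega> $ i \<partial>M) = 0"
proof -
  have P: "past k \<union> {IZ (Suc k)} \<subseteq> sample_indices" and Q: "{IX (Suc k), IW (Suc k)} \<subseteq> sample_indices"
    and disj: "(past k \<union> {IZ (Suc k)}) \<inter> {IX (Suc k), IW (Suc k)} = {}"
    using past_sample_indices by (auto simp: sample_indices_def past_def)
  have "(\<integral>\<omega>. g \<omega> * noise (Suc k) \<omega> $ i \<partial>M) = (\<integral>\<omega>. g \<omega> \<partial>M) * (\<integral>\<omega>. noise (Suc k) \<omega> $ i \<partial>M)"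
    by (rule integral_mult_indep_generated[OF P Q disj assms(1) noise_measurable_generated[OF _ _ Q]
          assms(2) square_integrable_integrable[OF square_integrable_noise]]) simp_all
  then show ?thesis using integral_noise[of "Suc k" i] by simp
qed

lemma measurable_history_step:
  "f \<in> borel_measurable (history k) \<Longrightarrow> f \<in> borel_measurable (generated (past k \<union> {IZ (Suc k)}))"
  unfolding history_def
  by (rule measurable_generated_mono) (auto simp: sample_indices_def past_def)

lemma selected_measurable_step:
  "selected (Suc k) i \<in> borel_measurable (generated (past k \<union> {IZ (Suc k)}))"
  by (rule selected_measurable[OF Zs_measurable_generated]) (auto simp: sample_indices_def past_def)

definition increment :: "'m \<Rightarrow> nat \<Rightarrow> 'w \<Rightarrow> real" where
  "increment i k \<omega> =
    \<eta> k * (selected (Suc k) i \<omega> * (noise (Suc k) \<omega> $ i - drift k i \<omega>) + row_prob i * drift k i \<omega>)"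

text \<open>Averaging the selection over its law gives the deterministic drift -row_prob i * drift;
  the increment is the remaining fluctuation.\<close>

lemma err_Suc_increment:
  "err (Suc k) \<omega> $ i = err k \<omega> $ i - \<eta> k * row_prob i * drift k i \<omega> + increment i k \<omega>"
  by (simp add: err_Suc increment_def algebra_simps)

lemma increment_measurable: "increment i k \<in> borel_measurable (history (Suc k))"
  using measurable_history_mono[OF drift_measurable] selected_measurable_history
    noise_measurable_history
  unfolding increment_def[abs_def] by measurable

lemma square_integrable_increment: "square_integrable (increment i k)"
  unfolding increment_def[abs_def] using Zs_meas
  by (intro square_integrable_cmult square_integrable_add square_integrable_bounded_mult
      square_integrable_diff square_integrable_noise square_integrable_drift selected_measurable)
     (auto simp: abs_selected_le_1)

lemma integral_mult_increment:
  assumes g: "g \<in> borel_measurable (history k)" "square_integrable g"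
  shows "(\<integral>\<omega>. g \<omega> * increment i k \<omega> \<partial>M) = 0"
proof -
  let ?z = "selected (Suc k) i" and ?r = "\<lambda>\<omega>. noise (Suc k) \<omega> $ i" and ?b = "drift k i"
  have zg: "square_integrable (\<lambda>\<omega>. ?z \<omega> * g \<omega>)"
    using selected_measurable Zs_meas
    by (intro square_integrable_bounded_mult[OF g(2)]) (auto simp: abs_selected_le_1)
  have gb: "integrable M (\<lambda>\<omega>. g \<omega> * ?b \<omega>)"
    using g(2) square_integrable_drift by (rule integrable_mult_square_integrable)
  have "(\<integral>\<omega>. (?z \<omega> * g \<omega>) * ?r \<omega> \<partial>M) = 0"
    using selected_measurable_step measurable_history_step[OF g(1)] square_integrable_integrable[OF zg]
    by (intro integral_mult_noise) measurable
  moreover have "(\<integral>\<omega>. (?z \<omega> * g \<omega>) * ?b \<omega> \<partial>M) = (\<integral>\<omega>. g \<omega> * ?b \<omega> \<partial>M) * row_prob i"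
    using integral_mult_selected[OF borel_measurable_times[OF g(1) drift_measurable] gb]
    by (simp add: mult_ac)
  moreover have "(\<lambda>\<omega>. g \<omega> * increment i k \<omega>) = (\<lambda>\<omega>. \<eta> k * ((?z \<omega> * g \<omega>) * ?r \<omega>)
      - \<eta> k * ((?z \<omega> * g \<omega>) * ?b \<omega>) + (\<eta> k * row_prob i) * (g \<omega> * ?b \<omega>))"
    by (simp add: increment_def fun_eq_iff algebra_simps)
  ultimately show ?thesis
    using integrable_mult_square_integrable[OF zg square_integrable_noise, of "Suc k" i]
      integrable_mult_square_integrable[OF zg square_integrable_drift] gb
    by simp
qed

sublocale increments: orthogonal_increments M history "increment i"
proof
  show "subalgebra M (history n)" for n
    unfolding history_def by (rule subalgebra_generated[OF past_sample_indices])
  show "sets (history n) \<subseteq> sets (history (Suc n))" for n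
    using subalgebra_generated_mono[OF past_mono past_sample_indices]
    by (simp add: history_def subalgebra_def)
qed (auto intro: increment_measurable square_integrable_increment integral_mult_increment)

definition mse :: "nat \<Rightarrow> real" where
  "mse k = (\<Sum>i\<in>UNIV. (\<integral>\<omega>. (err k \<omega> $ i)\<^sup>2 \<partial>M) / row_prob i)"

definition gram_norm :: real where
  "gram_norm = onorm ((*v) gram)"

lemma mse_nonneg: "0 \<le> mse k"
  unfolding mse_def using row_prob_pos
  by (intro sum_nonneg divide_nonneg_pos integral_nonneg_AE) auto

lemma integral_drift_square_le: "(\<integral>\<omega>. (drift k i \<omega>)\<^sup>2 \<partial>M) \<le> gram_norm\<^sup>2 * mse k"
proof -
  have "(drift k i \<omega>)\<^sup>2 \<le> gram_norm\<^sup>2 * (\<Sum>l\<in>UNIV. (err k \<omega> $ l)\<^sup>2)" for \<omega>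
  proof -
    have "\<bar>drift k i \<omega>\<bar> \<le> gram_norm * norm (err k \<omega>)"
      unfolding drift_def gram_norm_def
      using component_le_norm_cart onorm[OF matrix_vector_mul_bounded_linear] order_trans by blast
    then have "\<bar>drift k i \<omega>\<bar>\<^sup>2 \<le> (gram_norm * norm (err k \<omega>))\<^sup>2" by (rule power_mono) simp
    then show ?thesis by (simp add: power_mult_distrib norm_square_vec)
  qed
  then have "(\<integral>\<omega>. (drift k i \<omega>)\<^sup>2 \<partial>M) \<le> (\<integral>\<omega>. gram_norm\<^sup>2 * (\<Sum>l\<in>UNIV. (err k \<omega> $ l)\<^sup>2) \<partial>M)"
    using square_integrable_square[OF square_integrable_drift] square_integrable_square[OF square_integrable_err]
    by (intro integral_mono) auto
  also have "\<dots> = gram_norm\<^sup>2 * (\<Sum>l\<in>UNIV. \<integral>\<omega>. (err k \<omega> $ l)\<^sup>2 \<partial>M)"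
    using square_integrable_square[OF square_integrable_err] by simp
  also have "\<dots> \<le> gram_norm\<^sup>2 * mse k"
    unfolding mse_def using row_prob_pos row_prob_le_1
    by (intro mult_left_mono sum_mono) (auto simp: le_divide_eq mult_left_le integral_nonneg_AE)
  finally show ?thesis .
qed

lemma integral_innovation_square_le:
  "(\<integral>\<omega>. (selected (Suc k) i \<omega> * (noise (Suc k) \<omega> $ i - drift k i \<omega>))\<^sup>2 \<partial>M)
    \<le> 2 * (noise_bound i + gram_norm\<^sup>2 * mse k)"
proof -
  let ?r = "\<lambda>\<omega>. noise (Suc k) \<omega> $ i" and ?b = "drift k i"
  have "(selected (Suc k) i \<omega> * (?r \<omega> - ?b \<omega>))\<^sup>2 \<le> 2 * (?r \<omega>)\<^sup>2 + 2 * (?b \<omega>)\<^sup>2" for \<omega>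
  proof -
    have "(selected (Suc k) i \<omega> * (?r \<omega> - ?b \<omega>))\<^sup>2 \<le> (?r \<omega> - ?b \<omega>)\<^sup>2"
      by (simp add: power_mult_distrib selected_square selected_def)
    then show ?thesis using square_sum_le[of "?r \<omega>" "- ?b \<omega>"] by simp
  qed
  then have "(\<integral>\<omega>. (selected (Suc k) i \<omega> * (?r \<omega> - ?b \<omega>))\<^sup>2 \<partial>M)
      \<le> (\<integral>\<omega>. 2 * (?r \<omega>)\<^sup>2 + 2 * (?b \<omega>)\<^sup>2 \<partial>M)"
    using Zs_meas square_integrable_square[OF square_integrable_noise, of "Suc k" i]
      square_integrable_square[OF square_integrable_drift]
    by (intro integral_mono square_integrable_square square_integrable_bounded_mult
        square_integrable_diff square_integrable_noise square_integrable_drift selected_measurable)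
       (auto simp: abs_selected_le_1)
  also have "\<dots> = 2 * (\<integral>\<omega>. (?r \<omega>)\<^sup>2 \<partial>M) + 2 * (\<integral>\<omega>. (?b \<omega>)\<^sup>2 \<partial>M)"
    using square_integrable_square[OF square_integrable_noise, of "Suc k" i]
      square_integrable_square[OF square_integrable_drift] by simp
  also have "\<dots> \<le> 2 * (noise_bound i + gram_norm\<^sup>2 * mse k)"
    using integral_noise_square_le[of "Suc k" i] integral_drift_square_le[of k i] by simp
  finally show ?thesis .
qed

lemma integral_err_square_Suc:
  "(\<integral>\<omega>. (err (Suc k) \<omega> $ i)\<^sup>2 \<partial>M) = (\<integral>\<omega>. (err k \<omega> $ i)\<^sup>2 \<partial>M)
    - 2 * \<eta> k * row_prob i * (\<integral>\<omega>. err k \<omega> $ i * drift k i \<omega> \<partial>M)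
    + (\<eta> k)\<^sup>2 * (\<integral>\<omega>. (selected (Suc k) i \<omega> * (noise (Suc k) \<omega> $ i - drift k i \<omega>))\<^sup>2 \<partial>M)"
proof -
  let ?z = "selected (Suc k) i" and ?r = "\<lambda>\<omega>. noise (Suc k) \<omega> $ i" and ?b = "drift k i"
    and ?e = "\<lambda>\<omega>. err k \<omega> $ i"
  have ze: "square_integrable (\<lambda>\<omega>. ?z \<omega> * ?e \<omega>)"
    using selected_measurable Zs_meas
    by (intro square_integrable_bounded_mult[OF square_integrable_err]) (auto simp: abs_selected_le_1)
  have zrb: "square_integrable (\<lambda>\<omega>. ?z \<omega> * (?r \<omega> - ?b \<omega>))"
    using selected_measurable Zs_meas
    by (intro square_integrable_bounded_mult square_integrable_diff square_integrable_noise
        square_integrable_drift) (auto simp: abs_selected_le_1)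
  have i1: "integrable M (\<lambda>\<omega>. (?z \<omega> * ?e \<omega>) * ?r \<omega>)"
    by (rule integrable_mult_square_integrable[OF ze square_integrable_noise]) simp
  have i2: "integrable M (\<lambda>\<omega>. (?z \<omega> * ?e \<omega>) * ?b \<omega>)"
    by (rule integrable_mult_square_integrable[OF ze square_integrable_drift])
  have "(\<lambda>\<omega>. (err (Suc k) \<omega> $ i)\<^sup>2) = (\<lambda>\<omega>. (?e \<omega>)\<^sup>2 + 2 * \<eta> k * ((?z \<omega> * ?e \<omega>) * ?r \<omega>)
      - 2 * \<eta> k * ((?z \<omega> * ?e \<omega>) * ?b \<omega>) + (\<eta> k)\<^sup>2 * (?z \<omega> * (?r \<omega> - ?b \<omega>))\<^sup>2)"
    by (simp add: err_Suc fun_eq_iff power2_eq_square algebra_simps)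
  then have "(\<integral>\<omega>. (err (Suc k) \<omega> $ i)\<^sup>2 \<partial>M) = (\<integral>\<omega>. (?e \<omega>)\<^sup>2 \<partial>M)
      + 2 * \<eta> k * (\<integral>\<omega>. (?z \<omega> * ?e \<omega>) * ?r \<omega> \<partial>M) - 2 * \<eta> k * (\<integral>\<omega>. (?z \<omega> * ?e \<omega>) * ?b \<omega> \<partial>M)
      + (\<eta> k)\<^sup>2 * (\<integral>\<omega>. (?z \<omega> * (?r \<omega> - ?b \<omega>))\<^sup>2 \<partial>M)"
    using square_integrable_square[OF square_integrable_err] square_integrable_square[OF zrb] i1 i2
    by simp
  moreover have "(\<integral>\<omega>. (?z \<omega> * ?e \<omega>) * ?r \<omega> \<partial>M) = 0"
    using selected_measurable_step measurable_history_step[OF err_measurable]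
      square_integrable_integrable[OF ze]
    by (intro integral_mult_noise) measurable
  moreover have "(\<integral>\<omega>. (?z \<omega> * ?e \<omega>) * ?b \<omega> \<partial>M) = (\<integral>\<omega>. ?e \<omega> * ?b \<omega> \<partial>M) * row_prob i"
    using integral_mult_selected[OF borel_measurable_times[OF err_measurable drift_measurable]
        integrable_mult_square_integrable[OF square_integrable_err square_integrable_drift]]
    by (simp add: mult_ac)
  ultimately show ?thesis by simp
qed

lemma sum_integral_err_drift_nonneg: "0 \<le> (\<Sum>i\<in>UNIV. \<integral>\<omega>. err k \<omega> $ i * drift k i \<omega> \<partial>M)"
proof -
  have "(\<Sum>i\<in>UNIV. \<integral>\<omega>. err k \<omega> $ i * drift k i \<omega> \<partial>M) = (\<integral>\<omega>. (\<Sum>i\<in>UNIV. err k \<omega> $ i * drift k i \<omega>) \<partial>M)"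
    by (rule Bochner_Integration.integral_sum[symmetric])
       (rule integrable_mult_square_integrable[OF square_integrable_err square_integrable_drift])
  also have "\<dots> = (\<integral>\<omega>. (norm (transpose A *v err k \<omega>))\<^sup>2 \<partial>M)"
  proof -
    have "(\<Sum>i\<in>UNIV. err k \<omega> $ i * drift k i \<omega>) = (norm (transpose A *v err k \<omega>))\<^sup>2" for \<omega>
      using quadratic_form_mult_transpose[of "err k \<omega>" A] by (simp add: drift_def gram_def inner_vec_def)
    then show ?thesis by simp
  qed
  also have "\<dots> \<ge> 0" by (rule integral_nonneg_AE) simp
  finally show ?thesis .
qed

lemma weighted_integral_err_square_Suc_le:
  "(\<integral>\<omega>. (err (Suc k) \<omega> $ i)\<^sup>2 \<partial>M) / row_prob i
    \<le> (\<integral>\<omega>. (err k \<omega> $ i)\<^sup>2 \<partial>M) / row_prob i - 2 * \<eta> k * (\<integral>\<omega>. err k \<omega> $ i * drift k i \<omega> \<partial>M)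
      + (\<eta> k)\<^sup>2 * (2 * noise_bound i / row_prob i + 2 * gram_norm\<^sup>2 / row_prob i * mse k)"
proof -
  let ?c = "\<integral>\<omega>. err k \<omega> $ i * drift k i \<omega> \<partial>M"
  have "(\<eta> k)\<^sup>2 * (\<integral>\<omega>. (selected (Suc k) i \<omega> * (noise (Suc k) \<omega> $ i - drift k i \<omega>))\<^sup>2 \<partial>M)
      \<le> (\<eta> k)\<^sup>2 * (2 * (noise_bound i + gram_norm\<^sup>2 * mse k))"
    by (rule mult_left_mono[OF integral_innovation_square_le]) simp
  then have "(\<integral>\<omega>. (err (Suc k) \<omega> $ i)\<^sup>2 \<partial>M) \<le> (\<integral>\<omega>. (err k \<omega> $ i)\<^sup>2 \<partial>M)
      - 2 * \<eta> k * row_prob i * ?c + (\<eta> k)\<^sup>2 * (2 * (noise_bound i + gram_norm\<^sup>2 * mse k))"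
    unfolding integral_err_square_Suc by linarith
  then have "(\<integral>\<omega>. (err (Suc k) \<omega> $ i)\<^sup>2 \<partial>M) / row_prob i \<le> ((\<integral>\<omega>. (err k \<omega> $ i)\<^sup>2 \<partial>M)
      - 2 * \<eta> k * row_prob i * ?c + (\<eta> k)\<^sup>2 * (2 * (noise_bound i + gram_norm\<^sup>2 * mse k))) / row_prob i"
    using row_prob_pos[of i] by (simp add: divide_right_mono)
  also have "\<dots> = (\<integral>\<omega>. (err k \<omega> $ i)\<^sup>2 \<partial>M) / row_prob i - 2 * \<eta> k * ?c
      + (\<eta> k)\<^sup>2 * (2 * noise_bound i / row_prob i + 2 * gram_norm\<^sup>2 / row_prob i * mse k)"
    using row_prob_pos[of i] by (simp add: field_simps)
  finally show ?thesis .
qed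

text \<open>The drift terms sum to the expectation of |A' err|^2, which is nonnegative, and can be dropped;
  the mean square error then grows at most by a factor 1 + O(\<eta>^2) per step.\<close>

lemma mse_Suc_le:
  "mse (Suc k) \<le> (1 + (\<Sum>i\<in>UNIV. 2 * gram_norm\<^sup>2 / row_prob i) * (\<eta> k)\<^sup>2) * mse k
    + (\<Sum>i\<in>UNIV. 2 * noise_bound i / row_prob i) * (\<eta> k)\<^sup>2"
proof -
  let ?c = "\<lambda>i. \<integral>\<omega>. err k \<omega> $ i * drift k i \<omega> \<partial>M"
  have "mse (Suc k) \<le> (\<Sum>i\<in>UNIV. (\<integral>\<omega>. (err k \<omega> $ i)\<^sup>2 \<partial>M) / row_prob i - 2 * \<eta> k * ?c i
      + (\<eta> k)\<^sup>2 * (2 * noise_bound i / row_prob i + 2 * gram_norm\<^sup>2 / row_prob i * mse k))"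
    unfolding mse_def[of "Suc k"] by (rule sum_mono) (rule weighted_integral_err_square_Suc_le)
  also have "\<dots> = mse k - 2 * \<eta> k * (\<Sum>i\<in>UNIV. ?c i)
      + (\<eta> k)\<^sup>2 * ((\<Sum>i\<in>UNIV. 2 * noise_bound i / row_prob i)
        + (\<Sum>i\<in>UNIV. 2 * gram_norm\<^sup>2 / row_prob i) * mse k)"
  proof -
    have "(\<Sum>i\<in>UNIV. (\<integral>\<omega>. (err k \<omega> $ i)\<^sup>2 \<partial>M) / row_prob i) = mse k"
      by (simp add: mse_def)
    moreover have "(\<Sum>i\<in>UNIV. 2 * \<eta> k * ?c i) = 2 * \<eta> k * (\<Sum>i\<in>UNIV. ?c i)"
      by (simp add: sum_distrib_left)
    moreover have "(\<Sum>i\<in>UNIV. (\<eta> k)\<^sup>2 * (2 * noise_bound i / row_prob i + 2 * gram_norm\<^sup>2 / row_prob i * mse k))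
        = (\<eta> k)\<^sup>2 * ((\<Sum>i\<in>UNIV. 2 * noise_bound i / row_prob i)
          + (\<Sum>i\<in>UNIV. 2 * gram_norm\<^sup>2 / row_prob i) * mse k)"
      by (simp only: sum_distrib_left[symmetric] sum_distrib_right[symmetric] sum.distrib)
    ultimately show ?thesis by (simp add: sum.distrib sum_subtractf)
  qed
  also have "\<dots> \<le> (1 + (\<Sum>i\<in>UNIV. 2 * gram_norm\<^sup>2 / row_prob i) * (\<eta> k)\<^sup>2) * mse k
      + (\<Sum>i\<in>UNIV. 2 * noise_bound i / row_prob i) * (\<eta> k)\<^sup>2"
    using mult_nonneg_nonneg[OF less_imp_le[OF eta_pos[rule_format, of k]] sum_integral_err_drift_nonneg]
    by (simp add: algebra_simps)
  finally show ?thesis .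
qed

lemma mse_bounded: obtains C where "\<And>k. mse k \<le> C"
proof
  show "mse k \<le> exp ((\<Sum>i\<in>UNIV. 2 * gram_norm\<^sup>2 / row_prob i) * (\<Sum>j. (\<eta> j)\<^sup>2))
      * (mse 0 + (\<Sum>i\<in>UNIV. 2 * noise_bound i / row_prob i) * (\<Sum>j. (\<eta> j)\<^sup>2))" for k
    using row_prob_pos noise_bound_nonneg
    by (intro discrete_gronwall_bound[OF mse_Suc_le mse_nonneg _ _ _ eta_sq])
       (auto intro!: sum_nonneg divide_nonneg_pos)
qed

lemma integral_increment_square_le:
  assumes "\<And>k. mse k \<le> C"
  shows "(\<integral>\<omega>. (increment i k \<omega>)\<^sup>2 \<partial>M) \<le> (\<eta> k)\<^sup>2 * (4 * noise_bound i + 6 * gram_norm\<^sup>2 * C)"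
proof -
  let ?u = "\<lambda>\<omega>. selected (Suc k) i \<omega> * (noise (Suc k) \<omega> $ i - drift k i \<omega>)"
  have u: "square_integrable ?u"
    using selected_measurable Zs_meas
    by (intro square_integrable_bounded_mult square_integrable_diff square_integrable_noise
        square_integrable_drift) (auto simp: abs_selected_le_1)
  have "(row_prob i * drift k i \<omega>)\<^sup>2 \<le> (drift k i \<omega>)\<^sup>2" for \<omega>
    using row_prob_pos[of i] row_prob_le_1[of i]
    by (simp add: power_mult_distrib mult_left_le_one_le power_le_one)
  then have "(increment i k \<omega>)\<^sup>2 \<le> (\<eta> k)\<^sup>2 * (2 * (?u \<omega>)\<^sup>2 + 2 * (drift k i \<omega>)\<^sup>2)" for \<omega>
  proof -
    have "(increment i k \<omega>)\<^sup>2 = (\<eta> k)\<^sup>2 * (?u \<omega> + row_prob i * drift k i \<omega>)\<^sup>2"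
      by (simp add: increment_def power_mult_distrib)
    also have "\<dots> \<le> (\<eta> k)\<^sup>2 * (2 * (?u \<omega>)\<^sup>2 + 2 * (row_prob i * drift k i \<omega>)\<^sup>2)"
      by (rule mult_left_mono[OF square_sum_le]) simp
    also have "\<dots> \<le> (\<eta> k)\<^sup>2 * (2 * (?u \<omega>)\<^sup>2 + 2 * (drift k i \<omega>)\<^sup>2)"
      using \<open>(row_prob i * drift k i \<omega>)\<^sup>2 \<le> (drift k i \<omega>)\<^sup>2\<close> by (intro mult_left_mono) auto
    finally show ?thesis .
  qed
  then have "(\<integral>\<omega>. (increment i k \<omega>)\<^sup>2 \<partial>M)
      \<le> (\<integral>\<omega>. (\<eta> k)\<^sup>2 * (2 * (?u \<omega>)\<^sup>2 + 2 * (drift k i \<omega>)\<^sup>2) \<partial>M)"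
    using square_integrable_square[OF square_integrable_increment] square_integrable_square[OF u]
      square_integrable_square[OF square_integrable_drift]
    by (intro integral_mono) auto
  also have "\<dots> = (\<eta> k)\<^sup>2 * (2 * (\<integral>\<omega>. (?u \<omega>)\<^sup>2 \<partial>M) + 2 * (\<integral>\<omega>. (drift k i \<omega>)\<^sup>2 \<partial>M))"
    using square_integrable_square[OF u] square_integrable_square[OF square_integrable_drift] by simp
  also have "\<dots> \<le> (\<eta> k)\<^sup>2 * (4 * noise_bound i + 6 * gram_norm\<^sup>2 * C)"
  proof (rule mult_left_mono)
    have "gram_norm\<^sup>2 * mse k \<le> gram_norm\<^sup>2 * C" using assms by (simp add: mult_left_mono)
    then show "2 * (\<integral>\<omega>. (?u \<omega>)\<^sup>2 \<partial>M) + 2 * (\<integral>\<omega>. (drift k i \<omega>)\<^sup>2 \<partial>M)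
        \<le> 4 * noise_bound i + 6 * gram_norm\<^sup>2 * C"
      using integral_innovation_square_le[of k i] integral_drift_square_le[of k i] by simp
  qed simp
  finally show ?thesis .
qed

lemma AE_convergent_sum_increment: "AE \<omega> in M. convergent (\<lambda>n. \<Sum>j<n. increment i j \<omega>)"
proof -
  obtain C where C: "\<And>k. mse k \<le> C" using mse_bounded by blast
  have "summable (\<lambda>k. (\<eta> k)\<^sup>2 * (4 * noise_bound i + 6 * gram_norm\<^sup>2 * C))"
    by (rule summable_mult2[OF eta_sq])
  moreover have "norm (\<integral>\<omega>. (increment i k \<omega>)\<^sup>2 \<partial>M) \<le> (\<eta> k)\<^sup>2 * (4 * noise_bound i + 6 * gram_norm\<^sup>2 * C)"
    for k
    using integral_increment_square_le[OF C, of i k] integral_nonneg_AE[of "\<lambda>\<omega>. (increment i k \<omega>)\<^sup>2" M]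
    by simp
  ultimately have "summable (\<lambda>k. \<integral>\<omega>. (increment i k \<omega>)\<^sup>2 \<partial>M)"
    by (rule summable_comparison_test'[where N=0])
  then show ?thesis by (rule increments.AE_convergent_increment_sums)
qed

lemma eta_tendsto_zero: "\<eta> \<longlonglongrightarrow> 0"
proof -
  have "(\<lambda>k. sqrt ((\<eta> k)\<^sup>2)) \<longlonglongrightarrow> sqrt 0"
    by (rule tendsto_real_sqrt[OF summable_LIMSEQ_zero[OF eta_sq]])
  then show ?thesis using eta_pos by (simp add: less_imp_le)
qed

theorem AE_tendsto_alpha_star: "AE \<omega> in M. (\<lambda>k. \<alpha> k \<omega>) \<longlonglongrightarrow> alpha_star"
proof -
  obtain \<mu> where "0 < \<mu>" and coercive: "\<And>u. \<mu> * (norm u)\<^sup>2 \<le> u \<bullet> (gram *v u)"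
    using mult_transpose_coercive[OF full_rank] unfolding gram_def by blast
  have "AE \<omega> in M. \<forall>i\<in>UNIV. convergent (\<lambda>n. \<Sum>j<n. increment i j \<omega>)"
    by (rule AE_finite_allI) (auto intro: AE_convergent_sum_increment)
  then show ?thesis
  proof (rule eventually_mono)
    fix \<omega> assume "\<forall>i\<in>UNIV. convergent (\<lambda>n. \<Sum>j<n. increment i j \<omega>)"
    then have "(\<lambda>n. \<chi> i. \<Sum>j<n. increment i j \<omega>) \<longlonglongrightarrow> (\<chi> i. lim (\<lambda>n. \<Sum>j<n. increment i j \<omega>))"
      by (intro vec_tendstoI) (simp add: convergent_LIMSEQ_iff)
    moreover have "err (Suc k) \<omega> = err k \<omega> - \<eta> k *\<^sub>R (\<chi> i. row_prob i * (gram *v err k \<omega>) $ i)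
        + ((\<chi> i. \<Sum>j<Suc k. increment i j \<omega>) - (\<chi> i. \<Sum>j<k. increment i j \<omega>))" for k
      by (simp add: vec_eq_iff err_Suc_increment drift_def algebra_simps)
    ultimately have "(\<lambda>k. err k \<omega>) \<longlonglongrightarrow> 0"
      by (intro perturbed_linear_recursion_tendsto_zero[where w=row_prob and B=gram,
            OF row_prob_pos row_prob_le_1 \<open>0 < \<mu>\<close> coercive eta_pos[rule_format] eta_tendsto_zero eta_div])
    then have "(\<lambda>k. err k \<omega> + alpha_star) \<longlonglongrightarrow> 0 + alpha_star"
      by (rule tendsto_add[OF _ tendsto_const])
    then show "(\<lambda>k. \<alpha> k \<omega>) \<longlonglongrightarrow> alpha_star" by (simp add: err_def)
  qed
qed

end

theorem theorem2:
  fixes M :: "'w measure"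
    and A :: "real^'n^'m"
    and X :: "'w \<Rightarrow> real^'n" and W :: "'w \<Rightarrow> real^'m" and Z :: "'w \<Rightarrow> 'm"
    and Xs :: "nat \<Rightarrow> 'w \<Rightarrow> real^'n" and Ws :: "nat \<Rightarrow> 'w \<Rightarrow> real^'m"
    and Zs :: "nat \<Rightarrow> 'w \<Rightarrow> 'm"
    and \<eta> :: "nat \<Rightarrow> real" and x0 :: "real^'n"
    and \<alpha> :: "nat \<Rightarrow> 'w \<Rightarrow> real^'m"
  assumes P: "prob_space M"
    and dim: "CARD('m) < CARD('n)"
    and full_rank: "rank A = CARD('m)"
    and unit_rows: "\<forall>i. norm (A $ i) = 1"
    and X_meas: "X \<in> borel_measurable M"
    and X_sq: "integrable M (\<lambda>\<omega>. (norm (X \<omega>))\<^sup>2)"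
    and W_meas: "W \<in> borel_measurable M"
    and W_int: "integrable M W" and W_mean: "integral\<^sup>L M W = 0"
    and W_sq: "integrable M (\<lambda>\<omega>. (norm (W \<omega>))\<^sup>2)"
    and Z_meas: "Z \<in> measurable M (count_space UNIV)"
    and Z_pos: "\<forall>i. measure M {\<omega> \<in> space M. Z \<omega> = i} > 0"
    and Xs_meas: "\<forall>k\<ge>1. Xs k \<in> borel_measurable M"
    and Ws_meas: "\<forall>k\<ge>1. Ws k \<in> borel_measurable M"
    and Zs_meas: "\<forall>k\<ge>1. Zs k \<in> measurable M (count_space UNIV)"
    and Xs_distr: "\<forall>k\<ge>1. distr M borel (Xs k) = distr M borel X"
    and Ws_distr: "\<forall>k\<ge>1. distr M borel (Ws k) = distr M borel W"
    and Zs_distr: "\<forall>k\<ge>1. distr M (count_space UNIV) (Zs k) = distr M (count_space UNIV) Z"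
    and indep: "prob_space.indep_sets M (kacz_events M Xs Ws Zs)
                  ({IX k | k. k \<ge> 1} \<union> {IW k | k. k \<ge> 1} \<union> {IZ k | k. k \<ge> 1})"
    and eta_pos: "\<forall>k. \<eta> k > 0"
    and eta_div: "\<not> summable \<eta>"
    and eta_sq: "summable (\<lambda>k. (\<eta> k)\<^sup>2)"
    and alpha0: "\<forall>\<omega>. \<alpha> 0 \<omega> = 0"
    and alpha_rec: "\<forall>k \<omega>. \<alpha> (Suc k) \<omega> = \<alpha> k \<omega> + \<eta> k *\<^sub>R
          ((\<chi> i. if i = Zs (Suc k) \<omega>
                  then (A *v Xs (Suc k) \<omega> + Ws (Suc k) \<omega>) $ Zs (Suc k) \<omega> else 0)
           - unit_diag (Zs (Suc k) \<omega>) *v (A *v (x0 + transpose A *v \<alpha> k \<omega>)))"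
  shows "AE \<omega> in M. (\<lambda>k. \<alpha> k \<omega>) \<longlonglongrightarrow>
           matrix_inv (A ** transpose A) *v
             (integral\<^sup>L M (\<lambda>\<omega>. A *v X \<omega> + W \<omega>) - A *v x0)"
proof -
  interpret kaczmarz_iteration M A X W Z Xs Ws Zs \<eta> x0 \<alpha>
    by (rule kaczmarz_iteration.intro[OF P kaczmarz_iteration_axioms.intro]; fact)
  show ?thesis
    using AE_tendsto_alpha_star unfolding alpha_star_def gram_def mean_Y_def .
qed

end
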